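(* Let $(E,\rho)$ be a weighted space with $E$ locally compact. Let $(\lambda_t)_{t\ge0}$ be a Feller process on $E$ with semigroup of transition probabilities $(p(t))_{t\ge0}$ on $(E,\mathcal{B}(E))$ (so that $P(t)f(x)=\int f(y)p(t)(x,dy)$ defines a Feller semigroup on $C_0(E)$) and with initial distribution $\nu\in\mathcal{M}^\rho(E)$. Suppose there exist $t_0>0$ and $C>0$ such that $\mathbb{E}_x[\rho(\lambda_t)]\le C\rho(x)$ for all $x\in E$ and $0\le t\le t_0$. Then $\tilde P(t)f(x):=\int_E f(y)\,p(t)(x,dy)$ defines a generalized Feller semigroup $(\tilde P(t))_{t\ge0}$ on $\mathscr{B}^\rho(E)$, and $(\lambda_t)$ is a generalized Feller process with respect to its natural filtration and $(\tilde P(t))$, i.e. $\mathbb{E}_\nu[f(\lambda_t)\mid\mathcal{F}^0_s]=\tilde P(t-s)f(\lambda_s)$ a.s. for all $t\ge s\ge 0$, $f\in\mathscr{B}^\rho(E)$. Moreover, for every $x\in E$, with initial distribution $\delta_x$ the same holds with respect to the right-continuous enlargement of the natural filtration.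
   Context: A weighted space is a pair $(E,\rho)$ where $E$ is a completely regular Hausdorff topological space and $\rho:E\to(0,\infty)$ is an admissible weight function, meaning that for every $R\ge 0$ the sublevel set $K_R:=\{x\in E:\rho(x)\le R\}$ is compact. For $f:E\to\mathbb{R}$ put $\|f\|_\rho:=\sup_{x\in E}|f(x)|/\rho(x)$; $\mathscr{B}^\rho(E)$ denotes the closure of $C_b(E)$ with respect to $\|\cdot\|_\rho$ inside $\{f:E\to\mathbb{R}:\|f\|_\rho<\infty\}$. A generalized Feller semigroup on $\mathscr{B}^\rho(E)$ is a family $(P(t))_{t\ge0}$ of bounded linear operators on $\mathscr{B}^\rho(E)$ such that (P1) $P(0)=\mathrm{Id}$; (P2) $P(t+s)=P(s)P(t)$ for all $s,t\ge0$; (P3) $\lim_{t\downarrow0}P(t)f(x)=f(x)$ for all $f\in\mathscr{B}^\rho(E)$, $x\in E$; (P4) there exist $\varepsilon>0$, $C<\infty$ with $\|P(t)\|_{L(\mathscr{B}^\rho(E))}\le C$ for all $t\in[0,\varepsilon]$; (P5) each $P(t)$ is a positive operator. $\mathcal{M}^\rho(E)$ is the set of signed Radon measures $\mu$ on $\mathcal{B}(E)$ with $\int\rho\,d|\mu|<\infty$. A Feller semigroup on $C_0(E)$ is a strongly continuous semigroup of positive contractions on $C_0(E)$ (continuous functions vanishing at infinity, sup norm); a Feller process is a Markov process whose transition semigroup is a Feller semigroup. *)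

theory Defs
  imports "HOL-Analysis.Analysis" "HOL-Probability.Probability"
begin

definition admissible_weight :: "('a::topological_space \<Rightarrow> real) \<Rightarrow> bool" where
  "admissible_weight \<rho> \<longleftrightarrow> (\<forall>x. \<rho> x > 0) \<and> (\<forall>R\<ge>0. compact {x. \<rho> x \<le> R})"

definition rho_norm :: "('a \<Rightarrow> real) \<Rightarrow> ('a \<Rightarrow> real) \<Rightarrow> real" where
  "rho_norm \<rho> f = (SUP x. \<bar>f x\<bar> / \<rho> x)"

definition Cb :: "('a::topological_space \<Rightarrow> real) set" where
  "Cb = {g. continuous_on UNIV g \<and> bounded (range g)}"

definition B_rho :: "('a::topological_space \<Rightarrow> real) \<Rightarrow> ('a \<Rightarrow> real) set" where
  "B_rho \<rho> = {f. bdd_above (range (\<lambda>x. \<bar>f x\<bar> / \<rho> x)) \<and>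
                 (\<forall>\<epsilon>>0. \<exists>g\<in>Cb. bdd_above (range (\<lambda>x. \<bar>f x - g x\<bar> / \<rho> x))
                                \<and> rho_norm \<rho> (\<lambda>x. f x - g x) \<le> \<epsilon>)}"

text \<open>Generalized Feller semigroup on B^rho(E), conditions (P1)--(P5), together
  with the requirement that each Q t is a bounded linear operator on B^rho(E).\<close>
definition gen_feller_semigroup ::
  "('a::topological_space \<Rightarrow> real) \<Rightarrow> (real \<Rightarrow> ('a \<Rightarrow> real) \<Rightarrow> ('a \<Rightarrow> real)) \<Rightarrow> bool" where
  "gen_feller_semigroup \<rho> Q \<longleftrightarrow>
     (\<forall>t\<ge>0. \<forall>f\<in>B_rho \<rho>. Q t f \<in> B_rho \<rho>) \<and>
     (\<forall>t\<ge>0. \<forall>f\<in>B_rho \<rho>. \<forall>g\<in>B_rho \<rho>. \<forall>a b::real.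
         Q t (\<lambda>x. a * f x + b * g x) = (\<lambda>x. a * Q t f x + b * Q t g x)) \<and>
     (\<forall>t\<ge>0. \<exists>K. \<forall>f\<in>B_rho \<rho>. rho_norm \<rho> (Q t f) \<le> K * rho_norm \<rho> f) \<and>
     (\<forall>f\<in>B_rho \<rho>. Q 0 f = f) \<and>
     (\<forall>s\<ge>0. \<forall>t\<ge>0. \<forall>f\<in>B_rho \<rho>. Q (t + s) f = Q s (Q t f)) \<and>
     (\<forall>f\<in>B_rho \<rho>. \<forall>x. ((\<lambda>t. Q t f x) \<longlongrightarrow> f x) (at_right 0)) \<and>
     (\<exists>\<epsilon>>0. \<exists>C. \<forall>t\<in>{0..\<epsilon>}. \<forall>f\<in>B_rho \<rho>. rho_norm \<rho> (Q t f) \<le> C * rho_norm \<rho> f) \<and>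
     (\<forall>t\<ge>0. \<forall>f\<in>B_rho \<rho>. (\<forall>x. f x \<ge> 0) \<longrightarrow> (\<forall>x. Q t f x \<ge> 0))"

definition C0 :: "('a::topological_space \<Rightarrow> real) set" where
  "C0 = {f. continuous_on UNIV f \<and> (\<forall>\<epsilon>>0. compact {x. \<bar>f x\<bar> \<ge> \<epsilon>})}"

definition transition_semigroup :: "(real \<Rightarrow> 'a::topological_space \<Rightarrow> 'a measure) \<Rightarrow> bool" where
  "transition_semigroup p \<longleftrightarrow>
     (\<forall>t\<ge>0. p t \<in> borel \<rightarrow>\<^sub>M prob_algebra borel) \<and>
     (\<forall>x. p 0 x = return borel x) \<and>
     (\<forall>s\<ge>0. \<forall>t\<ge>0. \<forall>x. \<forall>A\<in>sets borel.
         measure (p (s + t) x) A = (\<integral>y. measure (p t y) A \<partial>p s x))"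

text \<open>P(t) f x = int f(y) p(t)(x,dy) is a Feller semigroup on C_0(E):
  it maps C_0 into C_0 and is strongly continuous (positivity and contraction are
  automatic for probability kernels, the semigroup law is Chapman--Kolmogorov).\<close>
definition feller_transition :: "(real \<Rightarrow> 'a::topological_space \<Rightarrow> 'a measure) \<Rightarrow> bool" where
  "feller_transition p \<longleftrightarrow> transition_semigroup p \<and>
     (\<forall>t\<ge>0. \<forall>f\<in>C0. (\<lambda>x. \<integral>y. f y \<partial>p t x) \<in> C0) \<and>
     (\<forall>f\<in>C0. ((\<lambda>t. SUP x. \<bar>(\<integral>y. f y \<partial>p t x) - f x\<bar>) \<longlongrightarrow> 0) (at_right 0))"

definition nat_filtration :: "'w measure \<Rightarrow> (real \<Rightarrow> 'w \<Rightarrow> 'a::topological_space) \<Rightarrow> real \<Rightarrow> 'w measure" where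
  "nat_filtration M X s = sigma (space M)
     (\<Union>u\<in>{0..s}. {X u -` A \<inter> space M | A. A \<in> sets borel})"

definition rc_filtration :: "'w measure \<Rightarrow> (real \<Rightarrow> 'w \<Rightarrow> 'a::topological_space) \<Rightarrow> real \<Rightarrow> 'w measure" where
  "rc_filtration M X s = sigma (space M) (\<Inter>u\<in>{s<..}. sets (nat_filtration M X u))"

definition cadlag_paths :: "'w measure \<Rightarrow> (real \<Rightarrow> 'w \<Rightarrow> 'a::topological_space) \<Rightarrow> bool" where
  "cadlag_paths M X \<longleftrightarrow> (\<forall>\<omega>\<in>space M. \<forall>t\<ge>0.
       ((\<lambda>u. X u \<omega>) \<longlongrightarrow> X t \<omega>) (at_right t) \<and>
       (t > 0 \<longrightarrow> (\<exists>l. ((\<lambda>u. X u \<omega>) \<longlongrightarrow> l) (at_left t))))"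

definition feller_process ::
  "'w measure \<Rightarrow> ('a::topological_space \<Rightarrow> 'w measure) \<Rightarrow> (real \<Rightarrow> 'w \<Rightarrow> 'a)
     \<Rightarrow> (real \<Rightarrow> 'a \<Rightarrow> 'a measure) \<Rightarrow> bool" where
  "feller_process M P X p \<longleftrightarrow>
     feller_transition p \<and>
     P \<in> borel \<rightarrow>\<^sub>M prob_algebra M \<and>
     (\<forall>t\<ge>0. X t \<in> M \<rightarrow>\<^sub>M borel) \<and>
     cadlag_paths M X \<and>
     (\<forall>x. AE \<omega> in P x. X 0 \<omega> = x) \<and>
     (\<forall>x. \<forall>s\<ge>0. \<forall>t\<ge>s. \<forall>A\<in>sets borel.
        AE \<omega> in P x. real_cond_exp (P x) (nat_filtration M X s)
                        (\<lambda>\<omega>'. indicator A (X t \<omega>')) \<omega>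
                      = measure (p (t - s) (X s \<omega>)) A)"

definition radon_prob :: "'a::topological_space measure \<Rightarrow> bool" where
  "radon_prob \<nu> \<longleftrightarrow> prob_space \<nu> \<and> sets \<nu> = sets borel \<and>
     (\<forall>A\<in>sets borel. measure \<nu> A = (SUP K\<in>{K. compact K \<and> K \<subseteq> A}. measure \<nu> K))"

end

theory Submission
  imports Defs
begin

text \<open>
  Iterating the short-time moment bound through the Markov property gives
  \<open>\<integral> \<rho> dp(t, x) \<le> max C 1 ^ \<lceil>t / t\<^sub>0\<rceil> \<rho>(x)\<close> for all \<open>t\<close>, so \<open>T(t) f(x) = \<integral> f dp(t, x)\<close>
  (\<open>transition_op\<close>) is bounded in the weighted norm. Since \<open>C\<^sub>0\<close> is dense in \<open>B\<^sup>\<rho>\<close> (cut off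
  with Urysohn functions on the compact sublevel sets of \<open>\<rho>\<close>) and \<open>T(t)\<close> maps \<open>C\<^sub>0\<close> into \<open>C\<^sub>0 \<subseteq> C\<^sub>b\<close>, \<open>T(t)\<close> preserves \<open>B\<^sup>\<rho>\<close>,
  and strong continuity on \<open>C\<^sub>0\<close> yields pointwise continuity on \<open>B\<^sup>\<rho>\<close>.
  The Markov property passes from indicators to nonnegative test functions (on a set of \<open>F\<^sub>s\<close> the
  law of \<open>X\<^sub>t\<close> is the law of \<open>X\<^sub>s\<close> pushed through \<open>p(t - s)\<close>) and, splitting into positive and
  negative parts, to \<open>\<rho>\<close>-bounded ones; this identifies the conditional expectations for the natural
  filtration, under \<open>P\<^sub>x\<close> as well as under \<open>\<nu> \<bind> P\<close>. For the right-continuous enlargement one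
  first takes \<open>f \<in> C\<^sub>0\<close>, applies the Markov property at times \<open>u \<down> s\<close> and uses right-continuity of
  the paths and joint continuity of \<open>(t, x) \<mapsto> T(t) f(x)\<close>, then approximates a general \<open>f \<in> B\<^sup>\<rho>\<close>.
\<close>

lemma C0_bounded:
  fixes h :: "'a::topological_space \<Rightarrow> real"
  assumes "h \<in> C0"
  obtains B where "\<And>x. \<bar>h x\<bar> \<le> B"
proof -
  define S where "S = {x. \<bar>h x\<bar> \<ge> 1}"
  have "continuous_on UNIV h" "compact S" using assms by (auto simp: C0_def S_def)
  then have "bounded (h ` S)"
    by (meson compact_continuous_image compact_imp_bounded continuous_on_subset subset_UNIV)
  then obtain B where B: "\<forall>y\<in>h ` S. norm y \<le> B" unfolding bounded_iff by blast
  have "\<bar>h x\<bar> \<le> max 1 B" for x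
    using B by (cases "x \<in> S") (auto simp: S_def)
  then show ?thesis using that by blast
qed

lemma C0_subset_Cb: "C0 \<subseteq> Cb"
proof
  fix h :: "'a \<Rightarrow> real" assume h: "h \<in> C0"
  obtain B where "\<And>x. \<bar>h x\<bar> \<le> B" using C0_bounded[OF h] by blast
  then show "h \<in> Cb" using h by (auto simp: C0_def Cb_def bounded_iff)
qed

lemma Cb_bounded:
  assumes "g \<in> Cb"
  obtains B where "0 \<le> B" "\<And>x. \<bar>g x\<bar> \<le> B"
proof -
  obtain B where B: "\<forall>y\<in>range g. norm y \<le> B" using assms unfolding Cb_def bounded_iff by blast
  then have "\<bar>g x\<bar> \<le> B" for x by auto
  moreover from this have "0 \<le> B" by (meson abs_ge_zero order_trans)
  ultimately show ?thesis using that by blast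
qed

lemma borel_measurable_Cb: "g \<in> Cb \<Longrightarrow> g \<in> borel_measurable borel"
  by (auto simp: Cb_def intro: borel_measurable_continuous_onI)

lemma exists_compact_support_bump:
  fixes K :: "'a::t2_space set"
  assumes "completely_regular_space (euclidean :: 'a topology)"
    and "locally_compact_space (euclidean :: 'a topology)"
    and "compact K"
  obtains \<phi> :: "'a \<Rightarrow> real" and L where "continuous_on UNIV \<phi>" "\<forall>x. 0 \<le> \<phi> x \<and> \<phi> x \<le> 1"
    "\<forall>x\<in>K. \<phi> x = 1" "compact L" "\<forall>x. x \<notin> L \<longrightarrow> \<phi> x = 0"
proof -
  have "Hausdorff_space (euclidean :: 'a topology)"
    unfolding Hausdorff_space_def using separation_t2 by (auto simp: disjnt_def)
  then have "\<forall>K::'a set. compact K \<longrightarrow> (\<exists>U L. open U \<and> compact L \<and> closed L \<and> K \<subseteq> U \<and> U \<subseteq> L)"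
    using assms(2) locally_compact_space_compact_closed_compact[of euclidean] by auto
  from this[rule_format, OF assms(3)] obtain U L where UL: "open U" "compact L" "K \<subseteq> U" "U \<subseteq> L"
    by blast
  have "closedin euclidean (- U)" "disjnt K (- U)"
    using UL(1,3) by (auto simp: disjnt_def)
  then obtain \<phi> where \<phi>: "continuous_map euclidean (subtopology euclidean {0..1::real}) \<phi>"
    "\<phi> ` (- U) \<subseteq> {0}" "\<phi> ` K \<subseteq> {1}"
    using Urysohn_completely_regular_compact_closed[of 0 1 euclidean K "- U"] assms(1,3) by auto
  show ?thesis
  proof (rule that)
    show "continuous_on UNIV \<phi>" "\<forall>x. 0 \<le> \<phi> x \<and> \<phi> x \<le> 1"
      using \<phi>(1) unfolding continuous_map_in_subtopology by auto
    show "\<forall>x\<in>K. \<phi> x = 1" using \<phi>(3) by auto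
    show "\<forall>x. x \<notin> L \<longrightarrow> \<phi> x = 0" using \<phi>(2) UL(4) by auto
  qed (rule UL(2))
qed

locale weighted_space =
  fixes \<rho> :: "'a::t2_space \<Rightarrow> real"
  assumes admissible: "admissible_weight \<rho>"
begin

lemma weight_pos: "0 < \<rho> x"
  using admissible by (simp add: admissible_weight_def)

lemma weight_nonneg: "0 \<le> \<rho> x"
  using weight_pos less_imp_le by blast

lemma compact_sublevel_weight: "0 \<le> R \<Longrightarrow> compact {x. \<rho> x \<le> R}"
  using admissible by (simp add: admissible_weight_def)

lemma closed_sublevel_weight: "closed {x. \<rho> x \<le> R}"
proof (cases "0 \<le> R")
  case True
  then show ?thesis by (simp add: compact_imp_closed compact_sublevel_weight)
next
  case False
  then have "R < \<rho> x" for x using weight_pos[of x] by linarith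
  then have "{x. \<rho> x \<le> R} = {}" by (simp add: not_le)
  then show ?thesis by simp
qed

lemma borel_measurable_weight[measurable]: "\<rho> \<in> borel_measurable borel"
  unfolding borel_measurable_iff_le using closed_sublevel_weight by auto

text \<open>The sublevel sets \<open>{\<rho> \<le> 1/(n+1)}\<close> are a decreasing sequence of nonempty closed subsets
  of a compact set (if the claim failed); a common point would have weight \<open>0\<close>.\<close>
lemma weight_bounded_below: obtains r where "0 < r" "\<And>x. r \<le> \<rho> x"
proof (rule ccontr)
  assume "\<not> thesis"
  have ne: "\<exists>x. \<rho> x < 1 / Suc n" for n
  proof (rule ccontr)
    assume "\<nexists>x. \<rho> x < 1 / Suc n"
    then have "1 / Suc n \<le> \<rho> x" for x by (meson not_le)
    then show False using that[of "1 / Suc n"] \<open>\<not> thesis\<close> by simp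
  qed
  define D where "D n = {x. \<rho> x \<le> 1 / Suc n}" for n
  have decseq: "decseq D"
  proof (rule decseq_SucI)
    fix n
    have "1 / real (Suc (Suc n)) \<le> 1 / real (Suc n)" by (simp add: frac_le)
    then show "D (Suc n) \<subseteq> D n" unfolding D_def by (auto simp del: of_nat_Suc)
  qed
  have "(\<Inter>n. D n) \<noteq> {}"
  proof (rule compact_space_imp_nest)
    show "compact_space (subtopology euclidean (D 0))"
      using compact_sublevel_weight[of 1] by (simp add: D_def compact_space_subtopology)
    show "closedin (subtopology euclidean (D 0)) (D n)" for n
    proof -
      have "D n = D 0 \<inter> D n" using decseq by (auto simp: decseq_def)
      moreover have "closed (D n)" by (simp add: D_def closed_sublevel_weight)
      ultimately show ?thesis unfolding closedin_closed by blast
    qed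
    show "D n \<noteq> {}" for n using ne[of n] unfolding D_def by (auto intro: less_imp_le)
  qed (rule decseq)
  then obtain x where x: "\<And>n. \<rho> x \<le> 1 / Suc n" by (auto simp: D_def)
  obtain n where "inverse (Suc n) < \<rho> x" using reals_Archimedean[OF weight_pos[of x]] by blast
  with x[of n] show False by (simp add: inverse_eq_divide)
qed

lemma bounded_imp_weight_bounded:
  assumes "\<And>x. \<bar>g x\<bar> \<le> B"
  shows "\<exists>c. \<forall>x. \<bar>g x\<bar> \<le> c * \<rho> x"
proof -
  obtain r where r: "0 < r" "\<And>x. r \<le> \<rho> x" using weight_bounded_below by blast
  have "\<bar>g x\<bar> \<le> (max 0 B / r) * \<rho> x" for x
  proof -
    have "\<bar>g x\<bar> \<le> (max 0 B / r) * r" using assms[of x] r by simp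
    also have "\<dots> \<le> (max 0 B / r) * \<rho> x" using r by (intro mult_left_mono) auto
    finally show ?thesis .
  qed
  then show ?thesis by blast
qed

lemma abs_le_rho_norm:
  assumes "bdd_above (range (\<lambda>x. \<bar>f x\<bar> / \<rho> x))"
  shows "\<bar>f x\<bar> \<le> rho_norm \<rho> f * \<rho> x"
proof -
  have "\<bar>f x\<bar> / \<rho> x \<le> rho_norm \<rho> f" unfolding rho_norm_def using assms by (intro cSUP_upper) auto
  then show ?thesis using weight_pos[of x] by (simp add: pos_divide_le_eq)
qed

lemma rho_norm_le:
  assumes "\<And>x. \<bar>f x\<bar> \<le> c * \<rho> x"
  shows "bdd_above (range (\<lambda>x. \<bar>f x\<bar> / \<rho> x))" "rho_norm \<rho> f \<le> c"
proof -
  have le: "\<bar>f x\<bar> / \<rho> x \<le> c" for x using assms weight_pos[of x] by (simp add: pos_divide_le_eq)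
  then show "bdd_above (range (\<lambda>x. \<bar>f x\<bar> / \<rho> x))" by (intro bdd_aboveI2)
  show "rho_norm \<rho> f \<le> c" unfolding rho_norm_def using le by (intro cSUP_least) auto
qed

lemma abs_le_rho_norm_B_rho:
  assumes "f \<in> B_rho \<rho>"
  shows "\<bar>f x\<bar> \<le> rho_norm \<rho> f * \<rho> x"
proof (rule abs_le_rho_norm)
  show "bdd_above (range (\<lambda>x. \<bar>f x\<bar> / \<rho> x))" using assms unfolding B_rho_def mem_Collect_eq by (rule conjunct1)
qed

lemma B_rho_iff:
  "f \<in> B_rho \<rho> \<longleftrightarrow> (\<exists>c. \<forall>x. \<bar>f x\<bar> \<le> c * \<rho> x) \<and>
     (\<forall>e>0. \<exists>g\<in>Cb. \<forall>x. \<bar>f x - g x\<bar> \<le> e * \<rho> x)"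
proof
  assume f: "f \<in> B_rho \<rho>"
  have "\<exists>g\<in>Cb. \<forall>x. \<bar>f x - g x\<bar> \<le> e * \<rho> x" if "0 < e" for e
  proof -
    obtain g where g: "g \<in> Cb" "bdd_above (range (\<lambda>x. \<bar>f x - g x\<bar> / \<rho> x))"
      "rho_norm \<rho> (\<lambda>x. f x - g x) \<le> e"
      using f \<open>0 < e\<close> unfolding B_rho_def by blast
    have "\<bar>f x - g x\<bar> \<le> e * \<rho> x" for x
      using abs_le_rho_norm[OF g(2), of x] g(3) weight_pos[of x]
      by (meson mult_right_mono less_imp_le order_trans)
    with g(1) show ?thesis by blast
  qed
  moreover have "\<forall>x. \<bar>f x\<bar> \<le> rho_norm \<rho> f * \<rho> x"
    using f by (simp add: abs_le_rho_norm_B_rho)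
  ultimately show "(\<exists>c. \<forall>x. \<bar>f x\<bar> \<le> c * \<rho> x) \<and> (\<forall>e>0. \<exists>g\<in>Cb. \<forall>x. \<bar>f x - g x\<bar> \<le> e * \<rho> x)"
    by blast
next
  assume "(\<exists>c. \<forall>x. \<bar>f x\<bar> \<le> c * \<rho> x) \<and> (\<forall>e>0. \<exists>g\<in>Cb. \<forall>x. \<bar>f x - g x\<bar> \<le> e * \<rho> x)"
  then obtain c where c: "\<forall>x. \<bar>f x\<bar> \<le> c * \<rho> x"
    and approx: "\<forall>e>0. \<exists>g\<in>Cb. \<forall>x. \<bar>f x - g x\<bar> \<le> e * \<rho> x"
    by blast
  show "f \<in> B_rho \<rho>" unfolding B_rho_def
  proof (intro CollectI conjI allI impI)
    show "bdd_above (range (\<lambda>x. \<bar>f x\<bar> / \<rho> x))" using c by (intro rho_norm_le(1)) blast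
    fix e :: real assume "0 < e"
    then obtain g where "g \<in> Cb" "\<forall>x. \<bar>f x - g x\<bar> \<le> e * \<rho> x" using approx by blast
    then show "\<exists>g\<in>Cb. bdd_above (range (\<lambda>x. \<bar>f x - g x\<bar> / \<rho> x)) \<and> rho_norm \<rho> (\<lambda>x. f x - g x) \<le> e"
      using rho_norm_le[of "\<lambda>x. f x - g x" e] by blast
  qed
qed

lemma borel_measurable_B_rho:
  assumes "f \<in> B_rho \<rho>"
  shows "f \<in> borel_measurable borel"
proof -
  have "\<forall>n. \<exists>g. g \<in> Cb \<and> (\<forall>x. \<bar>f x - g x\<bar> \<le> \<rho> x / Suc n)"
  proof
    fix n
    have "0 < 1 / real (Suc n)" by simp
    then obtain g where "g \<in> Cb" "\<forall>x. \<bar>f x - g x\<bar> \<le> 1 / Suc n * \<rho> x"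
      using assms unfolding B_rho_iff by blast
    then show "\<exists>g. g \<in> Cb \<and> (\<forall>x. \<bar>f x - g x\<bar> \<le> \<rho> x / Suc n)" by auto
  qed
  from choice[OF this] obtain g where g: "\<forall>n. g n \<in> Cb \<and> (\<forall>x. \<bar>f x - g n x\<bar> \<le> \<rho> x / Suc n)" ..
  show ?thesis
  proof (rule borel_measurable_LIMSEQ_real)
    show "g n \<in> borel_measurable borel" for n using g by (simp add: borel_measurable_Cb)
    fix x
    have "(\<lambda>n. g n x - f x) \<longlonglongrightarrow> 0"
    proof (rule Lim_null_comparison[OF always_eventually])
      show "\<forall>n. norm (g n x - f x) \<le> \<rho> x / Suc n" using g by (simp add: abs_minus_commute)
      show "(\<lambda>n. \<rho> x / Suc n) \<longlonglongrightarrow> 0" by (rule LIMSEQ_Suc[OF lim_const_over_n])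
    qed
    then show "(\<lambda>n. g n x) \<longlonglongrightarrow> f x" by (simp add: LIM_zero_iff)
  qed
qed

lemma Cb_subset_B_rho: "Cb \<subseteq> B_rho \<rho>"
proof
  fix g :: "'a \<Rightarrow> real" assume g: "g \<in> Cb"
  obtain B where B: "\<And>x. \<bar>g x\<bar> \<le> B" using Cb_bounded[OF g] by blast
  show "g \<in> B_rho \<rho>" unfolding B_rho_iff
  proof (intro conjI allI impI)
    show "\<exists>c. \<forall>x. \<bar>g x\<bar> \<le> c * \<rho> x" by (rule bounded_imp_weight_bounded[OF B])
    fix e :: real assume "0 < e"
    then have "\<forall>x. \<bar>g x - g x\<bar> \<le> e * \<rho> x" by (simp add: weight_nonneg)
    with g show "\<exists>g'\<in>Cb. \<forall>x. \<bar>g x - g' x\<bar> \<le> e * \<rho> x" by blast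
  qed
qed

end

locale lc_weighted_space = weighted_space \<rho> for \<rho> :: "'a::t2_space \<Rightarrow> real" +
  assumes completely_regular: "completely_regular_space (euclidean :: 'a topology)"
    and locally_compact: "locally_compact_space (euclidean :: 'a topology)"
begin

text \<open>Cut off an approximating \<open>g \<in> C\<^sub>b\<close> outside a sublevel set of \<open>\<rho>\<close>; beyond that set \<open>\<rho>\<close>
  dominates the (bounded) error.\<close>
lemma C0_dense_B_rho:
  assumes "f \<in> B_rho \<rho>" "0 < d"
  obtains h where "h \<in> C0" "\<And>x. \<bar>f x - h x\<bar> \<le> d * \<rho> x"
proof -
  obtain g where g: "g \<in> Cb" "\<And>x. \<bar>f x - g x\<bar> \<le> (d/2) * \<rho> x"
    using assms unfolding B_rho_iff by (metis half_gt_zero)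
  obtain B where B: "0 \<le> B" "\<And>x. \<bar>g x\<bar> \<le> B" using Cb_bounded[OF g(1)] by blast
  define R where "R = 2 * B / d"
  have "0 \<le> R" using B(1) assms(2) by (simp add: R_def)
  then obtain \<phi> :: "'a \<Rightarrow> real" and L where \<phi>: "continuous_on UNIV \<phi>"
    "\<forall>x. 0 \<le> \<phi> x \<and> \<phi> x \<le> 1" "\<forall>x\<in>{x. \<rho> x \<le> R}. \<phi> x = 1"
    and L: "compact L" "\<forall>x. x \<notin> L \<longrightarrow> \<phi> x = 0"
    by (rule exists_compact_support_bump[OF completely_regular locally_compact compact_sublevel_weight])
  define h where "h x = g x * \<phi> x" for x
  have hc: "continuous_on UNIV h"
    unfolding h_def using g(1) \<phi>(1) by (intro continuous_on_mult) (auto simp: Cb_def)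
  have "h \<in> C0" unfolding C0_def
  proof (intro CollectI conjI hc allI impI)
    fix e :: real assume "0 < e"
    have "x \<in> L" if "e \<le> \<bar>h x\<bar>" for x
      using that \<open>0 < e\<close> L(2) by (cases "x \<in> L") (auto simp: h_def)
    then have "{x. e \<le> \<bar>h x\<bar>} = L \<inter> {x. e \<le> \<bar>h x\<bar>}" by blast
    moreover have "closed {x. e \<le> \<bar>h x\<bar>}"
      by (intro closed_Collect_le continuous_on_rabs hc continuous_on_const)
    ultimately show "compact {x. e \<le> \<bar>h x\<bar>}" using L(1) by (metis compact_Int_closed)
  qed
  moreover have "\<bar>f x - h x\<bar> \<le> d * \<rho> x" for x
  proof -
    have "\<bar>g x - h x\<bar> \<le> (d/2) * \<rho> x"
    proof (cases "\<rho> x \<le> R")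
      case True
      then show ?thesis using \<phi>(3) weight_pos[of x] assms(2) by (simp add: h_def)
    next
      case False
      have "g x - h x = g x * (1 - \<phi> x)" by (simp add: h_def algebra_simps)
      then have "\<bar>g x - h x\<bar> = \<bar>g x\<bar> * (1 - \<phi> x)" using \<phi>(2)[rule_format, of x] by (simp add: abs_mult)
      also have "\<dots> \<le> \<bar>g x\<bar>" using \<phi>(2)[rule_format, of x] by (intro mult_left_le) auto
      also have "\<dots> \<le> B" by (rule B(2))
      also have "\<dots> \<le> (d/2) * \<rho> x" using False assms(2) by (simp add: R_def field_simps)
      finally show ?thesis .
    qed
    then show ?thesis using g(2)[of x] by linarith
  qed
  ultimately show ?thesis by (rule that)
qed

end

lemma abs_integral_le_integral:
  fixes a b :: "'b \<Rightarrow> real"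
  assumes "integrable W a" "integrable W b" "\<And>\<omega>. \<omega> \<in> space W \<Longrightarrow> \<bar>a \<omega>\<bar> \<le> b \<omega>"
  shows "\<bar>\<integral>\<omega>. a \<omega> \<partial>W\<bar> \<le> (\<integral>\<omega>. b \<omega> \<partial>W)"
proof -
  have "norm (\<integral>\<omega>. a \<omega> \<partial>W) \<le> (\<integral>\<omega>. norm (a \<omega>) \<partial>W)" by (rule integral_norm_bound)
  also have "\<dots> \<le> (\<integral>\<omega>. b \<omega> \<partial>W)" by (rule integral_mono) (use assms in auto)
  finally show ?thesis by simp
qed

lemma abs_integral_indicator_diff_le:
  fixes a b w :: "'b \<Rightarrow> real"
  assumes "integrable W a" "integrable W b" "integrable W w" "B \<in> sets W"
    and "\<And>\<omega>. \<bar>a \<omega> - b \<omega>\<bar> \<le> d * w \<omega>"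
  shows "\<bar>(\<integral>\<omega>. indicator B \<omega> * a \<omega> \<partial>W) - (\<integral>\<omega>. indicator B \<omega> * b \<omega> \<partial>W)\<bar> \<le> d * (\<integral>\<omega>. w \<omega> \<partial>W)"
proof -
  have int: "integrable W (\<lambda>\<omega>. indicator B \<omega> * a \<omega>)" "integrable W (\<lambda>\<omega>. indicator B \<omega> * b \<omega>)"
    using integrable_mult_indicator[OF assms(4) assms(1)] integrable_mult_indicator[OF assms(4) assms(2)]
    by simp_all
  have "(\<integral>\<omega>. indicator B \<omega> * a \<omega> \<partial>W) - (\<integral>\<omega>. indicator B \<omega> * b \<omega> \<partial>W)
      = (\<integral>\<omega>. indicator B \<omega> * a \<omega> - indicator B \<omega> * b \<omega> \<partial>W)"
    using int by simp
  also have "\<bar>\<dots>\<bar> \<le> (\<integral>\<omega>. d * w \<omega> \<partial>W)"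
  proof (rule abs_integral_le_integral)
    fix \<omega>
    have "0 \<le> d * w \<omega>" using assms(5)[of \<omega>] by linarith
    then show "\<bar>indicator B \<omega> * a \<omega> - indicator B \<omega> * b \<omega>\<bar> \<le> d * w \<omega>"
      using assms(5)[of \<omega>] by (auto simp: indicator_def)
  qed (use int assms(3) in auto)
  finally show ?thesis by simp
qed

lemma nn_integral_less_top_if_le_mult:
  fixes h w :: "'b \<Rightarrow> real"
  assumes w: "w \<in> borel_measurable W" and fin: "(\<integral>\<^sup>+\<omega>. ennreal (w \<omega>) \<partial>W) < \<infinity>"
    and c: "0 \<le> c" and le: "\<And>\<omega>. h \<omega> \<le> c * w \<omega>"
  shows "(\<integral>\<^sup>+\<omega>. ennreal (h \<omega>) \<partial>W) < \<infinity>"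
proof -
  have "(\<integral>\<^sup>+\<omega>. ennreal (h \<omega>) \<partial>W) \<le> (\<integral>\<^sup>+\<omega>. ennreal c * ennreal (w \<omega>) \<partial>W)"
    using le c by (intro nn_integral_mono) (simp add: ennreal_mult'[symmetric] ennreal_leI)
  also have "\<dots> = ennreal c * (\<integral>\<^sup>+\<omega>. ennreal (w \<omega>) \<partial>W)" using w by (intro nn_integral_cmult) measurable
  also have "\<dots> < \<infinity>" using fin by (simp add: ennreal_mult_less_top)
  finally show ?thesis .
qed

lemma integrable_integral_eq_if_nn_integral_eq:
  fixes h1 h2 :: "'b \<Rightarrow> real"
  assumes "h1 \<in> borel_measurable W" "h2 \<in> borel_measurable W"
    and "\<And>\<omega>. 0 \<le> h1 \<omega>" "\<And>\<omega>. 0 \<le> h2 \<omega>"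
    and eq: "(\<integral>\<^sup>+\<omega>. ennreal (h1 \<omega>) \<partial>W) = (\<integral>\<^sup>+\<omega>. ennreal (h2 \<omega>) \<partial>W)"
    and fin: "(\<integral>\<^sup>+\<omega>. ennreal (h1 \<omega>) \<partial>W) < \<infinity>"
  shows "integrable W h1" "integrable W h2" "(\<integral>\<omega>. h1 \<omega> \<partial>W) = (\<integral>\<omega>. h2 \<omega> \<partial>W)"
  using assms by (auto intro!: integrableI_nonneg simp: integral_eq_nn_integral)

lemma eq_0_if_abs_le_all_pos:
  fixes a K :: real
  assumes "0 \<le> K" and le: "\<And>d. 0 < d \<Longrightarrow> \<bar>a\<bar> \<le> d * K"
  shows "a = 0"
proof -
  have "\<bar>a\<bar> \<le> 0 + e" if "0 < e" for e
  proof -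
    have "\<bar>a\<bar> \<le> (e / (K + 1)) * K" using le[of "e / (K + 1)"] that assms(1) by simp
    also have "\<dots> \<le> e" using that assms(1) by (simp add: field_simps)
    finally show ?thesis by simp
  qed
  then have "\<bar>a\<bar> \<le> 0" by (rule field_le_epsilon)
  then show ?thesis by simp
qed

lemma sigma_finite_subalgebra_of_prob:
  assumes "prob_space W" "space F = space W" "sets F \<subseteq> sets W"
  shows "sigma_finite_subalgebra W F"
proof -
  interpret prob_space W by (rule assms(1))
  have "finite_measure_subalgebra W F"
    by unfold_locales (use assms(2,3) in \<open>simp add: subalgebra_def\<close>)
  then show ?thesis by (rule finite_measure_subalgebra_is_sigma_finite)
qed

locale measurable_process =
  fixes M :: "'w measure" and X :: "real \<Rightarrow> 'w \<Rightarrow> 'a::topological_space"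
  assumes measurable_X[measurable]: "0 \<le> t \<Longrightarrow> X t \<in> M \<rightarrow>\<^sub>M borel"
begin

lemma generator_nat_filtration_subset_Pow:
  "(\<Union>u\<in>{0..s}. {X u -` A \<inter> space M | A. A \<in> sets borel}) \<subseteq> Pow (space M)"
  by auto

lemma space_nat_filtration[simp]: "space (nat_filtration M X s) = space M"
  unfolding nat_filtration_def by (rule space_measure_of[OF generator_nat_filtration_subset_Pow])

lemma sets_nat_filtration:
  "sets (nat_filtration M X s) = sigma_sets (space M) (\<Union>u\<in>{0..s}. {X u -` A \<inter> space M | A. A \<in> sets borel})"
  unfolding nat_filtration_def by (rule sets_measure_of[OF generator_nat_filtration_subset_Pow])

lemma sets_nat_filtration_subset: "sets (nat_filtration M X s) \<subseteq> sets M"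
  unfolding sets_nat_filtration
proof (rule sets.sigma_sets_subset, rule subsetI)
  fix S assume "S \<in> (\<Union>u\<in>{0..s}. {X u -` A \<inter> space M | A. A \<in> sets borel})"
  then obtain u A where "u \<in> {0..s}" "A \<in> sets borel" "S = X u -` A \<inter> space M" by blast
  then show "S \<in> sets M" using measurable_sets[OF measurable_X[of u]] by auto
qed

lemma sets_nat_filtration_mono:
  assumes "s \<le> v"
  shows "sets (nat_filtration M X s) \<subseteq> sets (nat_filtration M X v)"
  unfolding sets_nat_filtration
proof (rule sigma_sets_mono', rule subsetI)
  fix S assume "S \<in> (\<Union>u\<in>{0..s}. {X u -` A \<inter> space M | A. A \<in> sets borel})"
  then obtain u A where "u \<in> {0..s}" "A \<in> sets borel" "S = X u -` A \<inter> space M" by blast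
  moreover have "u \<in> {0..v}" using \<open>u \<in> {0..s}\<close> assms by auto
  ultimately show "S \<in> (\<Union>u\<in>{0..v}. {X u -` A \<inter> space M | A. A \<in> sets borel})" by blast
qed

lemma measurable_nat_filtration:
  assumes "0 \<le> u" "u \<le> s"
  shows "X u \<in> nat_filtration M X s \<rightarrow>\<^sub>M borel"
proof (rule measurableI)
  fix A :: "'a set" assume "A \<in> sets borel"
  then have "X u -` A \<inter> space M \<in> {X u -` A \<inter> space M | A. A \<in> sets borel}" by blast
  then have "X u -` A \<inter> space M \<in> (\<Union>u\<in>{0..s}. {X u -` A \<inter> space M | A. A \<in> sets borel})"
    using assms by (intro UN_I[of u]) auto
  then show "X u -` A \<inter> space (nat_filtration M X s) \<in> sets (nat_filtration M X s)"
    unfolding sets_nat_filtration space_nat_filtration by (rule sigma_sets.Basic)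
qed simp

lemma rc_filtration_generator_subset_Pow: "(\<Inter>v\<in>{s<..}. sets (nat_filtration M X v)) \<subseteq> Pow (space M)"
proof -
  have "(\<Inter>v\<in>{s<..}. sets (nat_filtration M X v)) \<subseteq> sets (nat_filtration M X (s + 1))"
    by (rule INT_lower) simp
  also have "\<dots> \<subseteq> sets M" by (rule sets_nat_filtration_subset)
  also have "\<dots> \<subseteq> Pow (space M)" using sets.space_closed[of M] by auto
  finally show ?thesis .
qed

lemma space_rc_filtration[simp]: "space (rc_filtration M X s) = space M"
  unfolding rc_filtration_def by (rule space_measure_of[OF rc_filtration_generator_subset_Pow])

lemma sets_rc_filtration:
  "sets (rc_filtration M X s) = sigma_sets (space M) (\<Inter>v\<in>{s<..}. sets (nat_filtration M X v))"
  unfolding rc_filtration_def by (rule sets_measure_of[OF rc_filtration_generator_subset_Pow])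

lemma sets_rc_filtration_subset_nat:
  assumes "s < u"
  shows "sets (rc_filtration M X s) \<subseteq> sets (nat_filtration M X u)"
proof -
  have "(\<Inter>v\<in>{s<..}. sets (nat_filtration M X v)) \<subseteq> sets (nat_filtration M X u)"
    using assms by (intro INT_lower) simp
  then have "sigma_sets (space (nat_filtration M X u)) (\<Inter>v\<in>{s<..}. sets (nat_filtration M X v))
      \<subseteq> sets (nat_filtration M X u)"
    by (rule sets.sigma_sets_subset)
  then show ?thesis by (simp add: sets_rc_filtration)
qed

lemma sets_rc_filtration_subset: "sets (rc_filtration M X s) \<subseteq> sets M"
  using sets_rc_filtration_subset_nat[of s "s + 1"] sets_nat_filtration_subset by auto

lemma measurable_rc_filtration:
  assumes "0 \<le> s"
  shows "X s \<in> rc_filtration M X s \<rightarrow>\<^sub>M borel"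
proof (rule measurable_from_subalg[OF _ measurable_nat_filtration[OF assms order_refl]])
  have "sets (nat_filtration M X s) \<subseteq> (\<Inter>v\<in>{s<..}. sets (nat_filtration M X v))"
    using sets_nat_filtration_mono by (auto intro: less_imp_le)
  also have "\<dots> \<subseteq> sets (rc_filtration M X s)"
    unfolding sets_rc_filtration by (rule sigma_sets_superset_generator)
  finally show "subalgebra (rc_filtration M X s) (nat_filtration M X s)"
    unfolding subalgebra_def by simp
qed

end

locale weighted_feller_process = lc_weighted_space \<rho>
  for \<rho> :: "'a::t2_space \<Rightarrow> real" +
  fixes M :: "'w measure" and P :: "'a \<Rightarrow> 'w measure" and X :: "real \<Rightarrow> 'w \<Rightarrow> 'a"
    and p :: "real \<Rightarrow> 'a \<Rightarrow> 'a measure" and t0 C :: real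
  assumes feller: "feller_process M P X p"
    and t0_pos: "0 < t0" and C_pos: "0 < C"
    and weight_moment: "\<forall>x. \<forall>t\<in>{0..t0}. (\<integral>\<^sup>+\<omega>. ennreal (\<rho> (X t \<omega>)) \<partial>P x) \<le> ennreal (C * \<rho> x)"
begin

sublocale measurable_process M X
  using feller by unfold_locales (simp add: feller_process_def)

lemma measurable_P: "P \<in> borel \<rightarrow>\<^sub>M prob_algebra M"
  using feller by (simp add: feller_process_def)

lemma measurable_P_subprob[measurable]: "P \<in> borel \<rightarrow>\<^sub>M subprob_algebra M"
  using measurable_P measurable_prob_algebraD by blast

lemma prob_space_P: "prob_space (P x)"
  using measurable_space[OF measurable_P, of x] by (simp add: space_prob_algebra)

lemma sets_P[measurable_cong]: "sets (P x) = sets M"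
  using measurable_space[OF measurable_P, of x] by (simp add: space_prob_algebra)

lemma space_P: "space (P x) = space M"
  using sets_P sets_eq_imp_space_eq by blast

lemma feller_transition: "feller_transition p"
  using feller by (simp add: feller_process_def)

lemma measurable_p: "0 \<le> t \<Longrightarrow> p t \<in> borel \<rightarrow>\<^sub>M prob_algebra borel"
  using feller_transition by (simp add: feller_transition_def transition_semigroup_def)

lemma measurable_p_subprob[measurable]: "0 \<le> t \<Longrightarrow> p t \<in> borel \<rightarrow>\<^sub>M subprob_algebra borel"
  using measurable_p measurable_prob_algebraD by blast

lemma prob_space_p: "0 \<le> t \<Longrightarrow> prob_space (p t x)"
  using measurable_space[OF measurable_p, of t x] by (simp add: space_prob_algebra)

lemma sets_p[measurable_cong]: "0 \<le> t \<Longrightarrow> sets (p t x) = sets borel"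
  using measurable_space[OF measurable_p, of t x] by (simp add: space_prob_algebra)

lemma p_0: "p 0 x = return borel x"
  using feller_transition by (simp add: feller_transition_def transition_semigroup_def)

lemma X_0: "AE \<omega> in P x. X 0 \<omega> = x"
  using feller by (simp add: feller_process_def)

lemma markov_indicator:
  "0 \<le> s \<Longrightarrow> s \<le> t \<Longrightarrow> A \<in> sets borel \<Longrightarrow>
    AE \<omega> in P x. real_cond_exp (P x) (nat_filtration M X s) (\<lambda>\<omega>'. indicator A (X t \<omega>')) \<omega>
      = measure (p (t - s) (X s \<omega>)) A"
  using feller by (simp add: feller_process_def)

lemma measurable_X_P[measurable]: "0 \<le> t \<Longrightarrow> X t \<in> P x \<rightarrow>\<^sub>M borel"
  by (simp add: measurable_cong_sets[OF sets_P refl])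

lemma sigma_finite_subalgebra_P:
  "sets F \<subseteq> sets M \<Longrightarrow> space F = space M \<Longrightarrow> sigma_finite_subalgebra (P x) F"
  by (rule sigma_finite_subalgebra_of_prob[OF prob_space_P]) (simp_all add: space_P sets_P)

lemma markov_nn_integral_indicator:
  assumes st: "0 \<le> s" "s \<le> t" and A: "A \<in> sets borel" and B: "B \<in> sets (nat_filtration M X s)"
  shows "(\<integral>\<^sup>+\<omega>. indicator B \<omega> * indicator A (X t \<omega>) \<partial>P x)
       = (\<integral>\<^sup>+\<omega>. indicator B \<omega> * emeasure (p (t - s) (X s \<omega>)) A \<partial>P x)"
proof -
  interpret prob_space "P x" by (rule prob_space_P)
  interpret sigma_finite_subalgebra "P x" "nat_filtration M X s"
    by (rule sigma_finite_subalgebra_P[OF sets_nat_filtration_subset]) simp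
  have BM: "B \<in> sets M" using B sets_nat_filtration_subset by blast
  have ts: "0 \<le> t" "0 \<le> t - s" using st by auto
  note prob = prob_space_p[OF ts(2)]
  have m1[measurable]: "(\<lambda>\<omega>. indicator A (X t \<omega>) :: real) \<in> borel_measurable (P x)"
    using ts(1) A by simp
  have int1: "integrable (P x) (\<lambda>\<omega>. indicator A (X t \<omega>) :: real)"
    by (rule integrable_const_bound[where B=1]) auto
  have m2: "(\<lambda>\<omega>. measure (p (t - s) (X s \<omega>)) A) \<in> borel_measurable (P x)"
    using measurable_compose[OF measurable_X_P[OF st(1)] measurable_compose[OF measurable_p[OF ts(2)] measurable_measure_prob_algebra[OF A]]] .
  have int2: "integrable (P x) (\<lambda>\<omega>. measure (p (t - s) (X s \<omega>)) A)"
    by (rule integrable_const_bound[where B=1]) (auto simp: m2 prob_space.prob_le_1[OF prob])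
  have "(\<integral>\<omega>\<in>B. indicator A (X t \<omega>) \<partial>P x)
      = (\<integral>\<omega>\<in>B. real_cond_exp (P x) (nat_filtration M X s) (\<lambda>\<omega>'. indicator A (X t \<omega>')) \<omega> \<partial>P x)"
    by (rule real_cond_exp_intA[OF int1 B])
  also have "\<dots> = (\<integral>\<omega>\<in>B. measure (p (t - s) (X s \<omega>)) A \<partial>P x)"
    unfolding set_lebesgue_integral_def
    by (rule integral_cong_AE) (use markov_indicator[OF st A, of x] m2 BM in \<open>auto simp: sets_P\<close>)
  finally have eq: "(\<integral>\<omega>. indicator B \<omega> * indicator A (X t \<omega>) \<partial>P x)
      = (\<integral>\<omega>. indicator B \<omega> * measure (p (t - s) (X s \<omega>)) A \<partial>P x)"
    unfolding set_lebesgue_integral_def by simp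
  have "(\<integral>\<^sup>+\<omega>. indicator B \<omega> * indicator A (X t \<omega>) \<partial>P x)
      = (\<integral>\<^sup>+\<omega>. ennreal (indicator B \<omega> * indicator A (X t \<omega>)) \<partial>P x)"
    by (intro nn_integral_cong) (auto simp: indicator_def)
  also have "\<dots> = ennreal (\<integral>\<omega>. indicator B \<omega> * indicator A (X t \<omega>) \<partial>P x)"
    by (rule nn_integral_eq_integral) (auto intro!: integrable_mult_indicator[OF _ int1, simplified] simp: BM sets_P)
  also have "\<dots> = ennreal (\<integral>\<omega>. indicator B \<omega> * measure (p (t - s) (X s \<omega>)) A \<partial>P x)"
    using eq by simp
  also have "\<dots> = (\<integral>\<^sup>+\<omega>. ennreal (indicator B \<omega> * measure (p (t - s) (X s \<omega>)) A) \<partial>P x)"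
    by (rule nn_integral_eq_integral[symmetric]) (auto intro!: integrable_mult_indicator[OF _ int2, simplified] simp: BM sets_P)
  also have "\<dots> = (\<integral>\<^sup>+\<omega>. indicator B \<omega> * emeasure (p (t - s) (X s \<omega>)) A \<partial>P x)"
    by (intro nn_integral_cong)
      (auto simp: indicator_def finite_measure.emeasure_eq_measure[OF prob_space.finite_measure[OF prob]])
  finally show ?thesis .
qed

lemma distr_X_restricted_eq_bind:
  fixes x :: 'a
  assumes st: "0 \<le> s" "s \<le> t" and B: "B \<in> sets (nat_filtration M X s)"
  defines "Q \<equiv> density (P x) (indicator B)"
  shows "distr Q borel (X t) = distr Q borel (X s) \<bind> p (t - s)"
proof -
  have BM: "B \<in> sets M" using B sets_nat_filtration_subset by blast
  have ts: "0 \<le> t" "0 \<le> t - s" using st by auto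
  have iB[measurable]: "(indicator B :: 'w \<Rightarrow> ennreal) \<in> borel_measurable (P x)"
    using BM by (simp add: sets_P)
  have sQ: "sets Q = sets M" by (simp add: Q_def sets_P)
  have XQ: "X t \<in> Q \<rightarrow>\<^sub>M borel" "X s \<in> Q \<rightarrow>\<^sub>M borel"
    using ts(1) st(1) by (simp_all add: measurable_cong_sets[OF sQ refl])
  define D where "D = distr Q borel (X s)"
  have sD: "sets D = sets borel" and neD: "space D \<noteq> {}" by (simp_all add: D_def)
  have pk: "p (t - s) \<in> D \<rightarrow>\<^sub>M subprob_algebra borel"
    unfolding measurable_cong_sets[OF sD refl] by (rule measurable_p_subprob[OF ts(2)])
  have em: "(\<lambda>y. emeasure (p (t - s) y) A) \<in> borel_measurable borel" if "A \<in> sets borel" for A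
    using measurable_emeasure_subprob_algebra[OF that] measurable_p_subprob[OF ts(2)]
    by (rule measurable_compose[rotated])
  show ?thesis
    unfolding D_def[symmetric]
  proof (rule measure_eqI)
    show "sets (distr Q borel (X t)) = sets (D \<bind> p (t - s))"
      by (simp add: sets_bind_measurable[OF pk neD])
    fix A assume "A \<in> sets (distr Q borel (X t))"
    then have A[measurable]: "A \<in> sets borel" by simp
    have "emeasure (distr Q borel (X t)) A = emeasure Q (X t -` A \<inter> space M)"
      using emeasure_distr[OF XQ(1) A] by (simp add: Q_def space_P)
    also have "\<dots> = (\<integral>\<^sup>+\<omega>. indicator B \<omega> * indicator (X t -` A \<inter> space M) \<omega> \<partial>P x)"
      unfolding Q_def
      by (rule emeasure_density[OF iB]) (use measurable_sets[OF measurable_X_P[OF ts(1)] A] in \<open>simp add: space_P\<close>)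
    also have "\<dots> = (\<integral>\<^sup>+\<omega>. indicator B \<omega> * indicator A (X t \<omega>) \<partial>P x)"
      by (rule nn_integral_cong) (auto simp: space_P indicator_def)
    also have "\<dots> = (\<integral>\<^sup>+\<omega>. indicator B \<omega> * emeasure (p (t - s) (X s \<omega>)) A \<partial>P x)"
      by (rule markov_nn_integral_indicator[OF st A B])
    also have "\<dots> = (\<integral>\<^sup>+\<omega>. emeasure (p (t - s) (X s \<omega>)) A \<partial>Q)"
      unfolding Q_def
      by (rule nn_integral_density[symmetric, OF iB]) (rule measurable_compose[OF measurable_X_P[OF st(1)] em[OF A]])
    also have "\<dots> = (\<integral>\<^sup>+y. emeasure (p (t - s) y) A \<partial>D)"
      unfolding D_def by (rule nn_integral_distr[symmetric, OF XQ(2)]) (simp add: em[OF A])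
    also have "\<dots> = emeasure (D \<bind> p (t - s)) A"
      by (rule emeasure_bind[symmetric, OF neD pk A])
    finally show "emeasure (distr Q borel (X t)) A = emeasure (D \<bind> p (t - s)) A" .
  qed
qed

lemma markov_nn_integral:
  fixes g :: "'a \<Rightarrow> ennreal"
  assumes st: "0 \<le> s" "s \<le> t" and B: "B \<in> sets (nat_filtration M X s)"
    and g[measurable]: "g \<in> borel_measurable borel"
  shows "(\<integral>\<^sup>+\<omega>. indicator B \<omega> * g (X t \<omega>) \<partial>P x)
       = (\<integral>\<^sup>+\<omega>. indicator B \<omega> * (\<integral>\<^sup>+y. g y \<partial>p (t - s) (X s \<omega>)) \<partial>P x)"
proof -
  define Q where "Q = density (P x) (indicator B)"
  have BM: "B \<in> sets M" using B sets_nat_filtration_subset by blast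
  have ts: "0 \<le> t" "0 \<le> t - s" using st by auto
  have iB[measurable]: "(indicator B :: 'w \<Rightarrow> ennreal) \<in> borel_measurable (P x)"
    using BM by (simp add: sets_P)
  have sQ: "sets Q = sets M" by (simp add: Q_def sets_P)
  have XQ: "X t \<in> Q \<rightarrow>\<^sub>M borel" "X s \<in> Q \<rightarrow>\<^sub>M borel"
    using ts(1) st(1) by (simp_all add: measurable_cong_sets[OF sQ refl])
  have sD: "sets (distr Q borel (X s)) = sets borel" by simp
  have pk: "p (t - s) \<in> distr Q borel (X s) \<rightarrow>\<^sub>M subprob_algebra borel"
    unfolding measurable_cong_sets[OF sD refl] by (rule measurable_p_subprob[OF ts(2)])
  have mg: "(\<lambda>y. \<integral>\<^sup>+z. g z \<partial>p (t - s) y) \<in> borel_measurable borel"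
    using nn_integral_measurable_subprob_algebra[OF g] measurable_p_subprob[OF ts(2)]
    by (rule measurable_compose[rotated])
  have "(\<integral>\<^sup>+\<omega>. indicator B \<omega> * g (X t \<omega>) \<partial>P x) = (\<integral>\<^sup>+\<omega>. g (X t \<omega>) \<partial>Q)"
    unfolding Q_def
    by (rule nn_integral_density[symmetric, OF iB]) (rule measurable_compose[OF measurable_X_P[OF ts(1)] g])
  also have "\<dots> = (\<integral>\<^sup>+y. g y \<partial>distr Q borel (X t))"
    by (rule nn_integral_distr[symmetric, OF XQ(1)]) simp
  also have "\<dots> = (\<integral>\<^sup>+y. g y \<partial>(distr Q borel (X s) \<bind> p (t - s)))"
    unfolding Q_def by (simp add: distr_X_restricted_eq_bind[OF st B])
  also have "\<dots> = (\<integral>\<^sup>+y. \<integral>\<^sup>+z. g z \<partial>p (t - s) y \<partial>distr Q borel (X s))"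
    by (rule nn_integral_bind[OF g pk])
  also have "\<dots> = (\<integral>\<^sup>+\<omega>. (\<integral>\<^sup>+z. g z \<partial>p (t - s) (X s \<omega>)) \<partial>Q)"
    by (rule nn_integral_distr[OF XQ(2)]) (simp add: mg)
  also have "\<dots> = (\<integral>\<^sup>+\<omega>. indicator B \<omega> * (\<integral>\<^sup>+z. g z \<partial>p (t - s) (X s \<omega>)) \<partial>P x)"
    unfolding Q_def by (rule nn_integral_density[OF iB]) (rule measurable_compose[OF measurable_X_P[OF st(1)] mg])
  finally show ?thesis .
qed

lemma markov_nn_integral_space:
  fixes g :: "'a \<Rightarrow> ennreal"
  assumes st: "0 \<le> s" "s \<le> t" and g: "g \<in> borel_measurable borel"
  shows "(\<integral>\<^sup>+\<omega>. g (X t \<omega>) \<partial>P x) = (\<integral>\<^sup>+\<omega>. (\<integral>\<^sup>+y. g y \<partial>p (t - s) (X s \<omega>)) \<partial>P x)"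
proof -
  have \<Omega>: "space M \<in> sets (nat_filtration M X s)"
    using sets.top[of "nat_filtration M X s"] by simp
  have "(\<integral>\<^sup>+\<omega>. g (X t \<omega>) \<partial>P x) = (\<integral>\<^sup>+\<omega>. indicator (space M) \<omega> * g (X t \<omega>) \<partial>P x)"
    by (rule nn_integral_cong) (simp add: space_P)
  also have "\<dots> = (\<integral>\<^sup>+\<omega>. indicator (space M) \<omega> * (\<integral>\<^sup>+y. g y \<partial>p (t - s) (X s \<omega>)) \<partial>P x)"
    by (rule markov_nn_integral[OF st \<Omega> g])
  also have "\<dots> = (\<integral>\<^sup>+\<omega>. (\<integral>\<^sup>+y. g y \<partial>p (t - s) (X s \<omega>)) \<partial>P x)"
    by (rule nn_integral_cong) (simp add: space_P)
  finally show ?thesis .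
qed

lemma nn_integral_X_eq:
  fixes g :: "'a \<Rightarrow> ennreal"
  assumes t: "0 \<le> t" and g: "g \<in> borel_measurable borel"
  shows "(\<integral>\<^sup>+\<omega>. g (X t \<omega>) \<partial>P x) = (\<integral>\<^sup>+y. g y \<partial>p t x)"
proof -
  interpret prob_space "P x" by (rule prob_space_P)
  have "(\<integral>\<^sup>+\<omega>. g (X t \<omega>) \<partial>P x) = (\<integral>\<^sup>+\<omega>. (\<integral>\<^sup>+y. g y \<partial>p (t - 0) (X 0 \<omega>)) \<partial>P x)"
    by (rule markov_nn_integral_space[OF order_refl t g])
  also have "\<dots> = (\<integral>\<^sup>+\<omega>. (\<integral>\<^sup>+y. g y \<partial>p t x) \<partial>P x)"
    by (rule nn_integral_cong_AE) (use X_0[of x] in auto)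
  also have "\<dots> = (\<integral>\<^sup>+y. g y \<partial>p t x)" by (simp add: emeasure_space_1)
  finally show ?thesis .
qed


lemma nn_integral_weight_p_le_short:
  assumes "t \<in> {0..t0}"
  shows "(\<integral>\<^sup>+y. ennreal (\<rho> y) \<partial>p t x) \<le> ennreal (C * \<rho> x)"
proof -
  have "(\<integral>\<^sup>+\<omega>. ennreal (\<rho> (X t \<omega>)) \<partial>P x) = (\<integral>\<^sup>+y. ennreal (\<rho> y) \<partial>p t x)"
    using assms by (intro nn_integral_X_eq) auto
  moreover have "(\<integral>\<^sup>+\<omega>. ennreal (\<rho> (X t \<omega>)) \<partial>P x) \<le> ennreal (C * \<rho> x)"
    using weight_moment assms by blast
  ultimately show ?thesis by simp
qed

text \<open>Iterate the short-time bound through the Markov property, one step of length \<open>t\<^sub>0\<close> at a time.\<close>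
lemma nn_integral_weight_p_le_pow:
  "t \<in> {0..real n * t0} \<Longrightarrow> (\<integral>\<^sup>+y. ennreal (\<rho> y) \<partial>p t x) \<le> ennreal (max C 1 ^ n * \<rho> x)"
proof (induction n arbitrary: t x)
  case 0
  then show ?case by (simp add: p_0 nn_integral_return)
next
  case (Suc n)
  define K where "K = max C 1"
  have K: "1 \<le> K" "C \<le> K" "1 \<le> K ^ n" by (auto simp: K_def)
  show ?case
  proof (cases "t \<le> t0")
    case True
    then have "(\<integral>\<^sup>+y. ennreal (\<rho> y) \<partial>p t x) \<le> ennreal (C * \<rho> x)"
      using nn_integral_weight_p_le_short Suc.prems by auto
    also have "\<dots> \<le> ennreal (K ^ Suc n * \<rho> x)"
    proof (rule ennreal_leI, rule mult_right_mono)
      have "K \<le> K * K ^ n" using K by (simp add: mult_le_cancel_left1)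
      from order_trans[OF K(2) this] show "C \<le> K ^ Suc n" by simp
    qed (rule weight_nonneg)
    finally show ?thesis by (simp add: K_def)
  next
    case False
    define s where "s = t - t0"
    have s: "0 \<le> s" "s \<le> t" "s \<in> {0..real n * t0}" "t - s = t0"
      using False Suc.prems t0_pos by (auto simp: s_def algebra_simps)
    have "(\<integral>\<^sup>+y. ennreal (\<rho> y) \<partial>p t x) = (\<integral>\<^sup>+\<omega>. ennreal (\<rho> (X t \<omega>)) \<partial>P x)"
      using s by (intro nn_integral_X_eq[symmetric]) auto
    also have "\<dots> = (\<integral>\<^sup>+\<omega>. (\<integral>\<^sup>+y. ennreal (\<rho> y) \<partial>p t0 (X s \<omega>)) \<partial>P x)"
      using markov_nn_integral_space[OF s(1,2), of "\<lambda>y. ennreal (\<rho> y)" x] s(4) by simp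
    also have "\<dots> \<le> (\<integral>\<^sup>+\<omega>. ennreal (C * \<rho> (X s \<omega>)) \<partial>P x)"
      by (rule nn_integral_mono) (use nn_integral_weight_p_le_short[of t0] t0_pos in auto)
    also have "\<dots> = ennreal C * (\<integral>\<^sup>+\<omega>. ennreal (\<rho> (X s \<omega>)) \<partial>P x)"
      using C_pos weight_nonneg s by (simp add: ennreal_mult nn_integral_cmult)
    also have "\<dots> = ennreal C * (\<integral>\<^sup>+y. ennreal (\<rho> y) \<partial>p s x)"
      using nn_integral_X_eq[OF s(1), of "\<lambda>y. ennreal (\<rho> y)" x] by simp
    also have "\<dots> \<le> ennreal C * ennreal (K ^ n * \<rho> x)"
      by (rule mult_left_mono) (use Suc.IH[OF s(3)] in \<open>auto simp: K_def\<close>)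
    also have "\<dots> \<le> ennreal (K ^ Suc n * \<rho> x)"
      using C_pos K weight_pos[of x] by (simp add: ennreal_mult[symmetric] mult_right_mono)
    finally show ?thesis by (simp add: K_def)
  qed
qed

definition moment_bound :: "real \<Rightarrow> real" where
  "moment_bound t = max C 1 ^ nat \<lceil>t / t0\<rceil>"

lemma one_le_moment_bound: "1 \<le> moment_bound t"
  by (simp add: moment_bound_def)

lemma nn_integral_weight_p_le:
  assumes "0 \<le> t"
  shows "(\<integral>\<^sup>+y. ennreal (\<rho> y) \<partial>p t x) \<le> ennreal (moment_bound t * \<rho> x)"
proof -
  have "t = t / t0 * t0" using t0_pos by simp
  also have "\<dots> \<le> of_int \<lceil>t / t0\<rceil> * t0" using t0_pos by (intro mult_right_mono le_of_int_ceiling) auto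
  also have "\<dots> = real (nat \<lceil>t / t0\<rceil>) * t0" using assms t0_pos by simp
  finally have "t \<in> {0..real (nat \<lceil>t / t0\<rceil>) * t0}" using assms by simp
  then show ?thesis unfolding moment_bound_def by (rule nn_integral_weight_p_le_pow)
qed

lemma integrable_weight_p: "0 \<le> t \<Longrightarrow> integrable (p t x) \<rho>"
  using nn_integral_weight_p_le[of t x] weight_nonneg
  by (intro integrableI_nonneg) (auto simp: measurable_cong_sets[OF sets_p refl] le_less_trans)

lemma integral_weight_p_le:
  assumes "0 \<le> t" "(\<integral>\<^sup>+y. ennreal (\<rho> y) \<partial>p t x) \<le> ennreal (K * \<rho> x)" "0 \<le> K"
  shows "(\<integral>y. \<rho> y \<partial>p t x) \<le> K * \<rho> x"
proof -
  have "ennreal (\<integral>y. \<rho> y \<partial>p t x) = (\<integral>\<^sup>+y. ennreal (\<rho> y) \<partial>p t x)"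
    using integrable_weight_p[OF assms(1)] weight_nonneg by (intro nn_integral_eq_integral[symmetric]) auto
  with assms(2) have "ennreal (\<integral>y. \<rho> y \<partial>p t x) \<le> ennreal (K * \<rho> x)" by simp
  then show ?thesis using assms(3) weight_nonneg[of x] by (metis ennreal_le_iff mult_nonneg_nonneg)
qed

lemma nn_integral_weight_X_finite: "0 \<le> t \<Longrightarrow> (\<integral>\<^sup>+\<omega>. ennreal (\<rho> (X t \<omega>)) \<partial>P x) < \<infinity>"
  using nn_integral_X_eq[of t "\<lambda>y. ennreal (\<rho> y)" x] nn_integral_weight_p_le[of t x]
  by (simp add: le_less_trans)

lemma integrable_p_weight_bounded:
  assumes "0 \<le> t" "f \<in> borel_measurable borel" "\<And>y. \<bar>f y\<bar> \<le> c * \<rho> y"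
  shows "integrable (p t x) f"
proof (rule Bochner_Integration.integrable_bound[of _ "\<lambda>y. c * \<rho> y"])
  show "integrable (p t x) (\<lambda>y. c * \<rho> y)" using integrable_weight_p[OF assms(1)] by simp
  show "f \<in> borel_measurable (p t x)" using assms(2) by (simp add: measurable_cong_sets[OF sets_p[OF assms(1)] refl])
  show "AE y in p t x. norm (f y) \<le> norm (c * \<rho> y)" using assms(3) by (auto intro: order_trans abs_ge_self)
qed

definition transition_op :: "real \<Rightarrow> ('a \<Rightarrow> real) \<Rightarrow> 'a \<Rightarrow> real" where
  "transition_op t f x = (\<integral>y. f y \<partial>p t x)"

lemma borel_measurable_transition_op:
  assumes "0 \<le> t" "f \<in> borel_measurable borel"
  shows "transition_op t f \<in> borel_measurable borel"
  unfolding transition_op_def[abs_def]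
  using integral_measurable_subprob_algebra[OF assms(2)] measurable_p_subprob[OF assms(1)]
  by (rule measurable_compose[rotated])

lemma transition_op_nonneg: "(\<And>y. 0 \<le> f y) \<Longrightarrow> 0 \<le> transition_op t f x"
  unfolding transition_op_def by (simp add: integral_nonneg_AE)

lemma transition_op_0: "f \<in> borel_measurable borel \<Longrightarrow> transition_op 0 f = f"
  by (simp add: transition_op_def p_0 integral_return fun_eq_iff)

lemma transition_op_diff:
  assumes "0 \<le> t" "f \<in> borel_measurable borel" "g \<in> borel_measurable borel"
    and "\<And>y. \<bar>f y\<bar> \<le> c * \<rho> y" "\<And>y. \<bar>g y\<bar> \<le> c' * \<rho> y"
  shows "transition_op t (\<lambda>y. f y - g y) x = transition_op t f x - transition_op t g x"
  unfolding transition_op_def using assms by (intro Bochner_Integration.integral_diff integrable_p_weight_bounded)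

lemma ennreal_transition_op:
  assumes "0 \<le> t" "g \<in> borel_measurable borel" "\<And>y. \<bar>g y\<bar> \<le> c * \<rho> y" "\<And>y. 0 \<le> g y"
  shows "ennreal (transition_op t g x) = (\<integral>\<^sup>+y. ennreal (g y) \<partial>p t x)"
  unfolding transition_op_def
  using assms by (intro nn_integral_eq_integral[symmetric] integrable_p_weight_bounded) auto

lemma abs_transition_op_le:
  assumes "0 \<le> t" "f \<in> borel_measurable borel" "\<And>y. \<bar>f y\<bar> \<le> c * \<rho> y"
  shows "\<bar>transition_op t f x\<bar> \<le> c * transition_op t \<rho> x"
  unfolding transition_op_def
  using abs_integral_le_integral[of "p t x" f "\<lambda>y. c * \<rho> y"] integrable_weight_p[OF assms(1)]
    integrable_p_weight_bounded[OF assms] assms(3) by simp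

lemma transition_op_weight_le:
  assumes "0 \<le> t"
  shows "transition_op t \<rho> x \<le> moment_bound t * \<rho> x"
    and "t \<le> t0 \<Longrightarrow> transition_op t \<rho> x \<le> C * \<rho> x"
proof -
  have "0 \<le> moment_bound t" using one_le_moment_bound[of t] by linarith
  then show "transition_op t \<rho> x \<le> moment_bound t * \<rho> x"
    unfolding transition_op_def using assms by (intro integral_weight_p_le nn_integral_weight_p_le)
  show "transition_op t \<rho> x \<le> C * \<rho> x" if "t \<le> t0"
    unfolding transition_op_def using assms that C_pos
    by (intro integral_weight_p_le nn_integral_weight_p_le_short) auto
qed

lemma abs_transition_op_le_weight:
  assumes "0 \<le> t" "f \<in> borel_measurable borel" "\<And>y. \<bar>f y\<bar> \<le> c * \<rho> y"
  shows "\<bar>transition_op t f x\<bar> \<le> c * moment_bound t * \<rho> x"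
    and "t \<le> t0 \<Longrightarrow> \<bar>transition_op t f x\<bar> \<le> c * C * \<rho> x"
proof -
  have c: "0 \<le> c" using assms(3)[of x] weight_pos[of x] by (meson abs_ge_zero order_trans zero_le_mult_iff not_le)
  show "\<bar>transition_op t f x\<bar> \<le> c * moment_bound t * \<rho> x"
    using order_trans[OF abs_transition_op_le[OF assms, of x] mult_left_mono[OF transition_op_weight_le(1)[OF assms(1)] c]]
    by (simp add: mult.assoc)
  show "\<bar>transition_op t f x\<bar> \<le> c * C * \<rho> x" if "t \<le> t0"
    using order_trans[OF abs_transition_op_le[OF assms, of x] mult_left_mono[OF transition_op_weight_le(2)[OF assms(1) that] c]]
    by (simp add: mult.assoc)
qed


lemma markov_integral_nonneg:
  fixes W :: "'w measure" and g :: "'a \<Rightarrow> real"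
  assumes sW: "sets W = sets M" and st: "0 \<le> s" "s \<le> t" and BM: "B \<in> sets M"
    and nn_markov: "\<And>g :: 'a \<Rightarrow> ennreal. g \<in> borel_measurable borel \<Longrightarrow>
        (\<integral>\<^sup>+\<omega>. indicator B \<omega> * g (X t \<omega>) \<partial>W)
      = (\<integral>\<^sup>+\<omega>. indicator B \<omega> * (\<integral>\<^sup>+y. g y \<partial>p (t - s) (X s \<omega>)) \<partial>W)"
    and fin: "(\<integral>\<^sup>+\<omega>. ennreal (\<rho> (X t \<omega>)) \<partial>W) < \<infinity>"
    and g[measurable]: "g \<in> borel_measurable borel" and bound: "\<And>y. \<bar>g y\<bar> \<le> c * \<rho> y"
    and nonneg: "\<And>y. 0 \<le> g y"
  shows "integrable W (\<lambda>\<omega>. indicator B \<omega> * g (X t \<omega>))"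
    "integrable W (\<lambda>\<omega>. indicator B \<omega> * transition_op (t - s) g (X s \<omega>))"
    "(\<integral>\<omega>. indicator B \<omega> * g (X t \<omega>) \<partial>W) = (\<integral>\<omega>. indicator B \<omega> * transition_op (t - s) g (X s \<omega>) \<partial>W)"
proof -
  have ts: "0 \<le> t" "0 \<le> t - s" using st by auto
  have c: "0 \<le> c" using bound[of undefined] weight_pos[of undefined]
    by (meson abs_ge_zero order_trans zero_le_mult_iff not_le)
  have [measurable]: "X t \<in> W \<rightarrow>\<^sub>M borel" "X s \<in> W \<rightarrow>\<^sub>M borel" "B \<in> sets W"
    using ts(1) st(1) BM sW by (simp_all add: measurable_cong_sets[OF sW refl])
  have [measurable]: "transition_op (t - s) g \<in> borel_measurable borel"
    by (rule borel_measurable_transition_op[OF ts(2) g])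
  have "(\<integral>\<^sup>+\<omega>. ennreal (indicator B \<omega> * g (X t \<omega>)) \<partial>W)
      = (\<integral>\<^sup>+\<omega>. indicator B \<omega> * ennreal (g (X t \<omega>)) \<partial>W)"
    by (rule nn_integral_cong) (simp add: indicator_def)
  also have "\<dots> = (\<integral>\<^sup>+\<omega>. indicator B \<omega> * (\<integral>\<^sup>+y. ennreal (g y) \<partial>p (t - s) (X s \<omega>)) \<partial>W)"
    by (rule nn_markov) simp
  also have "\<dots> = (\<integral>\<^sup>+\<omega>. ennreal (indicator B \<omega> * transition_op (t - s) g (X s \<omega>)) \<partial>W)"
    by (rule nn_integral_cong) (simp add: indicator_def ennreal_transition_op[OF ts(2) g bound nonneg])
  finally have eq: "(\<integral>\<^sup>+\<omega>. ennreal (indicator B \<omega> * g (X t \<omega>)) \<partial>W)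
      = (\<integral>\<^sup>+\<omega>. ennreal (indicator B \<omega> * transition_op (t - s) g (X s \<omega>)) \<partial>W)" .
  have "(\<integral>\<^sup>+\<omega>. ennreal (indicator B \<omega> * g (X t \<omega>)) \<partial>W) < \<infinity>"
  proof (rule nn_integral_less_top_if_le_mult[OF _ fin c])
    show "indicator B \<omega> * g (X t \<omega>) \<le> c * \<rho> (X t \<omega>)" for \<omega>
      using bound[of "X t \<omega>"] nonneg[of "X t \<omega>"] c weight_nonneg[of "X t \<omega>"] by (auto simp: indicator_def)
  qed simp
  moreover have "(\<lambda>\<omega>. indicator B \<omega> * g (X t \<omega>)) \<in> borel_measurable W"
    "(\<lambda>\<omega>. indicator B \<omega> * transition_op (t - s) g (X s \<omega>)) \<in> borel_measurable W"
    by measurable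
  moreover have "0 \<le> indicator B \<omega> * g (X t \<omega>)" "0 \<le> indicator B \<omega> * transition_op (t - s) g (X s \<omega>)"
    for \<omega> using nonneg by (simp_all add: transition_op_nonneg)
  ultimately show "integrable W (\<lambda>\<omega>. indicator B \<omega> * g (X t \<omega>))"
    "integrable W (\<lambda>\<omega>. indicator B \<omega> * transition_op (t - s) g (X s \<omega>))"
    "(\<integral>\<omega>. indicator B \<omega> * g (X t \<omega>) \<partial>W) = (\<integral>\<omega>. indicator B \<omega> * transition_op (t - s) g (X s \<omega>) \<partial>W)"
    using integrable_integral_eq_if_nn_integral_eq[OF _ _ _ _ eq] by blast+
qed

lemma markov_integral:
  fixes W :: "'w measure" and f :: "'a \<Rightarrow> real"
  assumes sW: "sets W = sets M" and st: "0 \<le> s" "s \<le> t" and BM: "B \<in> sets M"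
    and nn_markov: "\<And>g :: 'a \<Rightarrow> ennreal. g \<in> borel_measurable borel \<Longrightarrow>
        (\<integral>\<^sup>+\<omega>. indicator B \<omega> * g (X t \<omega>) \<partial>W)
      = (\<integral>\<^sup>+\<omega>. indicator B \<omega> * (\<integral>\<^sup>+y. g y \<partial>p (t - s) (X s \<omega>)) \<partial>W)"
    and fin: "(\<integral>\<^sup>+\<omega>. ennreal (\<rho> (X t \<omega>)) \<partial>W) < \<infinity>"
    and f: "f \<in> borel_measurable borel" and bound: "\<And>y. \<bar>f y\<bar> \<le> c * \<rho> y"
  shows "integrable W (\<lambda>\<omega>. indicator B \<omega> * f (X t \<omega>))"
    "integrable W (\<lambda>\<omega>. indicator B \<omega> * transition_op (t - s) f (X s \<omega>))"
    "(\<integral>\<omega>. indicator B \<omega> * f (X t \<omega>) \<partial>W) = (\<integral>\<omega>. indicator B \<omega> * transition_op (t - s) f (X s \<omega>) \<partial>W)"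
proof -
  define f\<^sub>p where "f\<^sub>p y = max 0 (f y)" for y
  define f\<^sub>n where "f\<^sub>n y = max 0 (- f y)" for y
  have ts: "0 \<le> t - s" using st by simp
  have parts: "\<bar>f\<^sub>p y\<bar> \<le> c * \<rho> y" "\<bar>f\<^sub>n y\<bar> \<le> c * \<rho> y" "0 \<le> f\<^sub>p y" "0 \<le> f\<^sub>n y"
    "f y = f\<^sub>p y - f\<^sub>n y" for y
    using bound[of y] abs_ge_zero[of "f y"] by (auto simp: f\<^sub>p_def f\<^sub>n_def abs_le_iff max_def)
  have meas: "f\<^sub>p \<in> borel_measurable borel" "f\<^sub>n \<in> borel_measurable borel"
    using f by (auto simp: f\<^sub>p_def[abs_def] f\<^sub>n_def[abs_def])
  note pos = markov_integral_nonneg[OF sW st BM nn_markov fin meas(1) parts(1) parts(3)]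
  note neg = markov_integral_nonneg[OF sW st BM nn_markov fin meas(2) parts(2) parts(4)]
  have split_X: "indicator B \<omega> * f (X t \<omega>) = indicator B \<omega> * f\<^sub>p (X t \<omega>) - indicator B \<omega> * f\<^sub>n (X t \<omega>)" for \<omega>
    using parts(5)[of "X t \<omega>"] by (simp add: right_diff_distrib)
  have "f = (\<lambda>y. f\<^sub>p y - f\<^sub>n y)" by (rule ext) (rule parts(5))
  then have "transition_op (t - s) f y = transition_op (t - s) f\<^sub>p y - transition_op (t - s) f\<^sub>n y" for y
    using transition_op_diff[OF ts meas parts(1,2)] by simp
  then have split_T: "indicator B \<omega> * transition_op (t - s) f (X s \<omega>)
      = indicator B \<omega> * transition_op (t - s) f\<^sub>p (X s \<omega>) - indicator B \<omega> * transition_op (t - s) f\<^sub>n (X s \<omega>)" for \<omega>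
    by (simp add: right_diff_distrib)
  show "integrable W (\<lambda>\<omega>. indicator B \<omega> * f (X t \<omega>))"
    "integrable W (\<lambda>\<omega>. indicator B \<omega> * transition_op (t - s) f (X s \<omega>))"
    "(\<integral>\<omega>. indicator B \<omega> * f (X t \<omega>) \<partial>W) = (\<integral>\<omega>. indicator B \<omega> * transition_op (t - s) f (X s \<omega>) \<partial>W)"
    unfolding split_X split_T using pos neg by (simp_all add: Bochner_Integration.integral_diff)
qed

lemma cond_exp_X_eq_transition_op:
  fixes W :: "'w measure" and f :: "'a \<Rightarrow> real"
  assumes "sigma_finite_subalgebra W F" and sW: "sets W = sets M" and st: "0 \<le> s" "s \<le> t"
    and XF: "X s \<in> F \<rightarrow>\<^sub>M borel"
    and nn_markov: "\<And>B g. B \<in> sets F \<Longrightarrow> (g :: 'a \<Rightarrow> ennreal) \<in> borel_measurable borel \<Longrightarrow>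
        (\<integral>\<^sup>+\<omega>. indicator B \<omega> * g (X t \<omega>) \<partial>W)
      = (\<integral>\<^sup>+\<omega>. indicator B \<omega> * (\<integral>\<^sup>+y. g y \<partial>p (t - s) (X s \<omega>)) \<partial>W)"
    and fin: "(\<integral>\<^sup>+\<omega>. ennreal (\<rho> (X t \<omega>)) \<partial>W) < \<infinity>"
    and f: "f \<in> borel_measurable borel" and bound: "\<And>y. \<bar>f y\<bar> \<le> c * \<rho> y"
  shows "integrable W (\<lambda>\<omega>. f (X t \<omega>))"
    "AE \<omega> in W. real_cond_exp W F (\<lambda>\<omega>. f (X t \<omega>)) \<omega> = transition_op (t - s) f (X s \<omega>)"
proof -
  interpret sigma_finite_subalgebra W F by (rule assms(1))
  have ts: "0 \<le> t - s" using st by simp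
  have FM: "B \<in> sets F \<Longrightarrow> B \<in> sets M" for B using subalg sW by (auto simp: subalgebra_def)
  have spW: "space W = space M" using sW sets_eq_imp_space_eq by blast
  have "space F = space M" using subalg spW by (simp add: subalgebra_def)
  then have \<Omega>: "space M \<in> sets F" using sets.top[of F] by simp
  note whole = markov_integral[OF sW st FM[OF \<Omega>] nn_markov[OF \<Omega>] fin f bound]
  have ind_space: "integrable W (\<lambda>\<omega>. indicator (space M) \<omega> * h \<omega>) \<longleftrightarrow> integrable W h" for h :: "'w \<Rightarrow> real"
    by (rule Bochner_Integration.integrable_cong) (auto simp: spW)
  show int: "integrable W (\<lambda>\<omega>. f (X t \<omega>))" using ind_space[THEN iffD1, OF whole(1)] .
  show "AE \<omega> in W. real_cond_exp W F (\<lambda>\<omega>. f (X t \<omega>)) \<omega> = transition_op (t - s) f (X s \<omega>)"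
  proof (rule real_cond_exp_charact)
    show "integrable W (\<lambda>\<omega>. transition_op (t - s) f (X s \<omega>))" using ind_space[THEN iffD1, OF whole(2)] .
    show "(\<lambda>\<omega>. transition_op (t - s) f (X s \<omega>)) \<in> borel_measurable F"
      by (rule measurable_compose[OF XF borel_measurable_transition_op[OF ts f]])
    fix B assume B: "B \<in> sets F"
    have "(\<integral>\<omega>. indicator B \<omega> * f (X t \<omega>) \<partial>W) = (\<integral>\<omega>. indicator B \<omega> * transition_op (t - s) f (X s \<omega>) \<partial>W)"
      by (rule markov_integral(3)[OF sW st FM[OF B] nn_markov[OF B] fin f bound])
    then show "(\<integral>\<omega>\<in>B. f (X t \<omega>) \<partial>W) = (\<integral>\<omega>\<in>B. transition_op (t - s) f (X s \<omega>) \<partial>W)"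
      unfolding set_lebesgue_integral_def by simp
  qed (rule int)
qed

lemma markov_integral_P:
  assumes st: "0 \<le> s" "s \<le> t" and B: "B \<in> sets (nat_filtration M X s)"
    and f: "f \<in> borel_measurable borel" and bound: "\<And>y. \<bar>f y\<bar> \<le> c * \<rho> y"
  shows "integrable (P x) (\<lambda>\<omega>. indicator B \<omega> * f (X t \<omega>))"
    "(\<integral>\<omega>. indicator B \<omega> * f (X t \<omega>) \<partial>P x) = (\<integral>\<omega>. indicator B \<omega> * transition_op (t - s) f (X s \<omega>) \<partial>P x)"
proof -
  have "B \<in> sets M" using B sets_nat_filtration_subset by blast
  from markov_integral[OF sets_P st this markov_nn_integral[OF st B, where x=x]
      nn_integral_weight_X_finite[of t x] f bound] st
  show "integrable (P x) (\<lambda>\<omega>. indicator B \<omega> * f (X t \<omega>))"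
    "(\<integral>\<omega>. indicator B \<omega> * f (X t \<omega>) \<partial>P x) = (\<integral>\<omega>. indicator B \<omega> * transition_op (t - s) f (X s \<omega>) \<partial>P x)"
    by simp_all
qed

lemma markov_integral_P_space:
  assumes st: "0 \<le> s" "s \<le> t" and f: "f \<in> borel_measurable borel" and bound: "\<And>y. \<bar>f y\<bar> \<le> c * \<rho> y"
  shows "(\<integral>\<omega>. f (X t \<omega>) \<partial>P x) = (\<integral>\<omega>. transition_op (t - s) f (X s \<omega>) \<partial>P x)"
proof -
  have \<Omega>: "space M \<in> sets (nat_filtration M X s)" using sets.top[of "nat_filtration M X s"] by simp
  have ind_space: "(\<integral>\<omega>. indicator (space M) \<omega> * k \<omega> \<partial>P x) = (\<integral>\<omega>. k \<omega> \<partial>P x)" for k :: "'w \<Rightarrow> real"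
    by (rule Bochner_Integration.integral_cong) (auto simp: space_P)
  show ?thesis using markov_integral_P(2)[OF st \<Omega> f bound, of x] by (simp only: ind_space)
qed

lemma integral_X_eq_transition_op:
  assumes u: "0 \<le> u" and h: "h \<in> borel_measurable borel" and bound: "\<And>y. \<bar>h y\<bar> \<le> c * \<rho> y"
  shows "(\<integral>\<omega>. h (X u \<omega>) \<partial>P x) = transition_op u h x"
proof -
  interpret prob_space "P x" by (rule prob_space_P)
  have "(\<integral>\<omega>. h (X u \<omega>) \<partial>P x) = (\<integral>\<omega>. transition_op (u - 0) h (X 0 \<omega>) \<partial>P x)"
    by (rule markov_integral_P_space[OF order_refl u h bound])
  also have "\<dots> = (\<integral>\<omega>. transition_op u h x \<partial>P x)"
    by (rule integral_cong_AE)
      (use X_0[of x] measurable_compose[OF measurable_X_P[OF order_refl] borel_measurable_transition_op[OF u h]] in auto)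
  also have "\<dots> = transition_op u h x" by (simp add: prob_space)
  finally show ?thesis .
qed

lemma integrable_X_weight_bounded:
  assumes u: "0 \<le> u" and g: "g \<in> borel_measurable borel" and bound: "\<And>y. \<bar>g y\<bar> \<le> c * \<rho> y"
  shows "integrable (P x) (\<lambda>\<omega>. g (X u \<omega>))"
proof (rule Bochner_Integration.integrable_bound)
  show "integrable (P x) (\<lambda>\<omega>. c * \<rho> (X u \<omega>))"
    using u weight_nonneg nn_integral_weight_X_finite[OF u, of x] by (intro integrable_mult_right integrableI_nonneg) auto
  show "(\<lambda>\<omega>. g (X u \<omega>)) \<in> borel_measurable (P x)" by (rule measurable_compose[OF measurable_X_P[OF u] g])
  show "AE \<omega> in P x. norm (g (X u \<omega>)) \<le> norm (c * \<rho> (X u \<omega>))"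
    using bound by (auto intro: order_trans abs_ge_self)
qed

lemma integrable_transition_op_X:
  assumes "0 \<le> s" "0 \<le> r" "g \<in> borel_measurable borel" "\<And>y. \<bar>g y\<bar> \<le> c * \<rho> y"
  shows "integrable (P x) (\<lambda>\<omega>. transition_op r g (X s \<omega>))"
  using abs_transition_op_le_weight(1)[OF assms(2-4)]
  by (intro integrable_X_weight_bounded[OF assms(1) borel_measurable_transition_op[OF assms(2,3)]]) auto

lemma transition_op_semigroup:
  assumes s: "0 \<le> s" and t: "0 \<le> t" and f: "f \<in> borel_measurable borel" and bound: "\<And>y. \<bar>f y\<bar> \<le> c * \<rho> y"
  shows "transition_op (t + s) f = transition_op s (transition_op t f)"
proof
  fix x
  have "transition_op (t + s) f x = (\<integral>\<omega>. f (X (t + s) \<omega>) \<partial>P x)"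
    using s t by (intro integral_X_eq_transition_op[symmetric, OF _ f bound]) auto
  also have "\<dots> = (\<integral>\<omega>. transition_op t f (X s \<omega>) \<partial>P x)"
    using markov_integral_P_space[of s "t + s", OF s _ f bound, of x] t by simp
  also have "\<dots> = transition_op s (transition_op t f) x"
    using abs_transition_op_le_weight(1)[OF t f bound]
    by (intro integral_X_eq_transition_op[OF s borel_measurable_transition_op[OF t f]]) auto
  finally show "transition_op (t + s) f x = transition_op s (transition_op t f) x" .
qed


lemma transition_op_C0: "0 \<le> t \<Longrightarrow> h \<in> C0 \<Longrightarrow> transition_op t h \<in> C0"
  using feller_transition unfolding feller_transition_def transition_op_def[abs_def] by blast

lemma transition_op_strongly_continuous_C0:
  "h \<in> C0 \<Longrightarrow> ((\<lambda>t. SUP y. \<bar>transition_op t h y - h y\<bar>) \<longlongrightarrow> 0) (at_right 0)"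
  using feller_transition unfolding feller_transition_def transition_op_def by blast

lemma abs_transition_op_diff_le_SUP:
  assumes "0 \<le> t" "h \<in> C0"
  shows "\<bar>transition_op t h y - h y\<bar> \<le> (SUP y. \<bar>transition_op t h y - h y\<bar>)"
proof (rule cSUP_upper)
  obtain B1 B2 where "\<And>y. \<bar>transition_op t h y\<bar> \<le> B1" "\<And>y. \<bar>h y\<bar> \<le> B2"
    using C0_bounded[OF transition_op_C0[OF assms]] C0_bounded[OF assms(2)] by metis
  then show "bdd_above (range (\<lambda>y. \<bar>transition_op t h y - h y\<bar>))"
    by (intro bdd_aboveI2[where M="B1 + B2"]) (smt (verit))
qed simp

lemma C0_subset_B_rho: "C0 \<subseteq> B_rho \<rho>"
  using C0_subset_Cb Cb_subset_B_rho by blast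

lemma abs_transition_op_diff_le:
  assumes t: "0 \<le> t" and f: "f \<in> B_rho \<rho>" and h: "h \<in> B_rho \<rho>" and d: "\<And>y. \<bar>f y - h y\<bar> \<le> d * \<rho> y"
  shows "\<bar>transition_op t f x - transition_op t h x\<bar> \<le> d * transition_op t \<rho> x"
proof -
  note fm = borel_measurable_B_rho[OF f] and hm = borel_measurable_B_rho[OF h]
  have "transition_op t f x - transition_op t h x = transition_op t (\<lambda>y. f y - h y) x"
    by (rule transition_op_diff[OF t fm hm abs_le_rho_norm_B_rho[OF f] abs_le_rho_norm_B_rho[OF h], symmetric])
  also have "\<bar>\<dots>\<bar> \<le> d * transition_op t \<rho> x"
    using fm hm d by (intro abs_transition_op_le[OF t]) auto
  finally show ?thesis .
qed

lemma transition_op_B_rho: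
  assumes t: "0 \<le> t" and f: "f \<in> B_rho \<rho>"
  shows "transition_op t f \<in> B_rho \<rho>"
  unfolding B_rho_iff
proof (intro conjI allI impI)
  note fm = borel_measurable_B_rho[OF f] and fb = abs_le_rho_norm_B_rho[OF f]
  show "\<exists>c. \<forall>x. \<bar>transition_op t f x\<bar> \<le> c * \<rho> x"
    using abs_transition_op_le_weight(1)[OF t fm fb] by blast
  fix e :: real assume "0 < e"
  then have d: "0 < e / moment_bound t" using one_le_moment_bound[of t] by simp
  obtain h where h: "h \<in> C0" "\<And>x. \<bar>f x - h x\<bar> \<le> e / moment_bound t * \<rho> x"
    using C0_dense_B_rho[OF f d] by blast
  have hB: "h \<in> B_rho \<rho>" using h(1) C0_subset_B_rho by blast
  have "\<bar>transition_op t f x - transition_op t h x\<bar> \<le> e * \<rho> x" for x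
  proof -
    have "\<bar>transition_op t f x - transition_op t h x\<bar> \<le> e / moment_bound t * transition_op t \<rho> x"
      by (rule abs_transition_op_diff_le[OF t f hB h(2)])
    also have "\<dots> \<le> e / moment_bound t * (moment_bound t * \<rho> x)"
      using \<open>0 < e\<close> one_le_moment_bound[of t] transition_op_weight_le(1)[OF t] by (intro mult_left_mono) auto
    also have "\<dots> = e * \<rho> x" using one_le_moment_bound[of t] by simp
    finally show ?thesis .
  qed
  moreover have "transition_op t h \<in> Cb" using transition_op_C0[OF t h(1)] C0_subset_Cb by blast
  ultimately show "\<exists>g\<in>Cb. \<forall>x. \<bar>transition_op t f x - g x\<bar> \<le> e * \<rho> x" by blast
qed

lemma rho_norm_transition_op_le:
  assumes t: "0 \<le> t" and f: "f \<in> B_rho \<rho>"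
  shows "rho_norm \<rho> (transition_op t f) \<le> moment_bound t * rho_norm \<rho> f"
    and "t \<le> t0 \<Longrightarrow> rho_norm \<rho> (transition_op t f) \<le> C * rho_norm \<rho> f"
proof -
  note bound = abs_transition_op_le_weight[OF t borel_measurable_B_rho[OF f] abs_le_rho_norm_B_rho[OF f]]
  show "rho_norm \<rho> (transition_op t f) \<le> moment_bound t * rho_norm \<rho> f"
    by (rule rho_norm_le(2)) (use bound(1) in \<open>simp add: mult_ac\<close>)
  show "rho_norm \<rho> (transition_op t f) \<le> C * rho_norm \<rho> f" if "t \<le> t0"
    by (rule rho_norm_le(2)) (use bound(2)[OF that] in \<open>simp add: mult_ac\<close>)
qed

lemma integrable_p_B_rho: "0 \<le> t \<Longrightarrow> f \<in> B_rho \<rho> \<Longrightarrow> integrable (p t x) f"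
  using integrable_p_weight_bounded borel_measurable_B_rho abs_le_rho_norm_B_rho by blast

lemma transition_op_linear:
  assumes t: "0 \<le> t" and f: "f \<in> B_rho \<rho>" and g: "g \<in> B_rho \<rho>"
  shows "transition_op t (\<lambda>x. a * f x + b * g x) = (\<lambda>x. a * transition_op t f x + b * transition_op t g x)"
proof
  fix x
  have "integrable (p t x) f" "integrable (p t x) g" using integrable_p_B_rho t f g by blast+
  then show "transition_op t (\<lambda>x. a * f x + b * g x) x = a * transition_op t f x + b * transition_op t g x"
    by (simp add: transition_op_def)
qed

text \<open>Approximate \<open>f\<close> by \<open>h \<in> C\<^sub>0\<close> within \<open>d \<rho>\<close>; for \<open>t \<le> t\<^sub>0\<close> the error stays within
  \<open>d C \<rho>\<close> after applying \<open>T(t)\<close>, while \<open>T(t) h \<rightarrow> h\<close> uniformly.\<close>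
lemma transition_op_tendsto:
  assumes f: "f \<in> B_rho \<rho>"
  shows "((\<lambda>t. transition_op t f x) \<longlongrightarrow> f x) (at_right 0)"
  unfolding tendsto_iff
proof (intro allI impI)
  fix e :: real assume e: "0 < e"
  define K where "K = (C + 1) * \<rho> x"
  have K: "0 < K" using C_pos weight_pos[of x] by (simp add: K_def)
  define d where "d = e / (3 * K)"
  have d: "0 < d" using e K by (simp add: d_def)
  have "d * C * \<rho> x + d * \<rho> x = d * K" by (simp add: K_def algebra_simps)
  also have "\<dots> = e / 3" using K by (simp add: d_def)
  finally have dd: "d * C * \<rho> x + d * \<rho> x = e / 3" .
  obtain h where h: "h \<in> C0" "\<And>y. \<bar>f y - h y\<bar> \<le> d * \<rho> y" using C0_dense_B_rho[OF f d] by blast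
  have hB: "h \<in> B_rho \<rho>" using h(1) C0_subset_B_rho by blast
  have ev1: "eventually (\<lambda>t. (SUP y. \<bar>transition_op t h y - h y\<bar>) < e / 3) (at_right 0)"
    using order_tendstoD(2)[OF transition_op_strongly_continuous_C0[OF h(1)], of "e / 3"] e by simp
  have ev2: "eventually (\<lambda>t. 0 < t \<and> t \<le> t0) (at_right (0::real))"
    unfolding eventually_at_right[OF t0_pos] by (intro exI[of _ t0]) (auto simp: t0_pos)
  show "eventually (\<lambda>t. dist (transition_op t f x) (f x) < e) (at_right 0)"
    using ev1 ev2
  proof (rule eventually_elim2)
    fix t assume sup: "(SUP y. \<bar>transition_op t h y - h y\<bar>) < e / 3" and "0 < t \<and> t \<le> t0"
    then have t: "0 \<le> t" "t \<le> t0" by auto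
    have "\<bar>transition_op t f x - transition_op t h x\<bar> \<le> d * transition_op t \<rho> x"
      by (rule abs_transition_op_diff_le[OF t(1) f hB h(2)])
    also have "\<dots> \<le> d * C * \<rho> x"
      using d transition_op_weight_le(2)[OF t] by (simp add: mult.assoc mult_left_mono)
    finally have "\<bar>transition_op t f x - transition_op t h x\<bar> \<le> d * C * \<rho> x" .
    moreover have "\<bar>transition_op t h x - h x\<bar> < e / 3"
      using abs_transition_op_diff_le_SUP[OF t(1) h(1), of x] sup by linarith
    moreover have "\<bar>h x - f x\<bar> \<le> d * \<rho> x" using h(2)[of x] by (simp add: abs_minus_commute)
    ultimately have "\<bar>transition_op t f x - f x\<bar> < e / 3 + e / 3" using dd by linarith
    then show "dist (transition_op t f x) (f x) < e" using e by (simp add: dist_real_def)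
  qed
qed

lemma gen_feller_semigroup_transition_op: "gen_feller_semigroup \<rho> transition_op"
  unfolding gen_feller_semigroup_def
proof (intro conjI)
  show "\<forall>t\<ge>0. \<forall>f\<in>B_rho \<rho>. transition_op t f \<in> B_rho \<rho>"
    using transition_op_B_rho by blast
  show "\<forall>t\<ge>0. \<forall>f\<in>B_rho \<rho>. \<forall>g\<in>B_rho \<rho>. \<forall>a b. transition_op t (\<lambda>x. a * f x + b * g x)
      = (\<lambda>x. a * transition_op t f x + b * transition_op t g x)"
    using transition_op_linear by blast
  show "\<forall>t\<ge>0. \<exists>K. \<forall>f\<in>B_rho \<rho>. rho_norm \<rho> (transition_op t f) \<le> K * rho_norm \<rho> f"
    using rho_norm_transition_op_le(1) by blast
  show "\<forall>f\<in>B_rho \<rho>. transition_op 0 f = f"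
    using transition_op_0 borel_measurable_B_rho by blast
  show "\<forall>s\<ge>0. \<forall>t\<ge>0. \<forall>f\<in>B_rho \<rho>. transition_op (t + s) f = transition_op s (transition_op t f)"
    using transition_op_semigroup borel_measurable_B_rho abs_le_rho_norm_B_rho by blast
  show "\<forall>f\<in>B_rho \<rho>. \<forall>x. ((\<lambda>t. transition_op t f x) \<longlongrightarrow> f x) (at_right 0)"
    using transition_op_tendsto by blast
  show "\<exists>\<epsilon>>0. \<exists>C. \<forall>t\<in>{0..\<epsilon>}. \<forall>f\<in>B_rho \<rho>. rho_norm \<rho> (transition_op t f) \<le> C * rho_norm \<rho> f"
    using t0_pos rho_norm_transition_op_le(2) by (intro exI[of _ t0] conjI exI[of _ C]) auto
  show "\<forall>t\<ge>0. \<forall>f\<in>B_rho \<rho>. (\<forall>x. 0 \<le> f x) \<longrightarrow> (\<forall>x. 0 \<le> transition_op t f x)"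
    using transition_op_nonneg by blast
qed


context
  fixes \<nu> :: "'a measure"
  assumes radon: "radon_prob \<nu>"
    and weight_moment_init: "(\<integral>\<^sup>+x. ennreal (\<rho> x) \<partial>\<nu>) < \<infinity>"
begin

lemma sets_init[measurable_cong]: "sets \<nu> = sets borel"
  using radon by (simp add: radon_prob_def)

lemma measurable_P_init: "P \<in> \<nu> \<rightarrow>\<^sub>M subprob_algebra M"
  using measurable_P_subprob by (simp add: measurable_cong_sets[OF sets_init refl])

lemma space_init_nonempty: "space \<nu> \<noteq> {}"
  using radon prob_space.not_empty by (auto simp: radon_prob_def)

lemma prob_space_init_bind: "prob_space (\<nu> \<bind> P)"
  using radon measurable_P by (intro prob_space_bind') (simp_all add: radon_prob_def space_prob_algebra)

lemma sets_init_bind: "sets (\<nu> \<bind> P) = sets M"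
  by (rule sets_bind_measurable[OF measurable_P_init space_init_nonempty])

lemma markov_nn_integral_init:
  fixes g :: "'a \<Rightarrow> ennreal"
  assumes st: "0 \<le> s" "s \<le> t" and B: "B \<in> sets (nat_filtration M X s)" and g[measurable]: "g \<in> borel_measurable borel"
  shows "(\<integral>\<^sup>+\<omega>. indicator B \<omega> * g (X t \<omega>) \<partial>(\<nu> \<bind> P))
       = (\<integral>\<^sup>+\<omega>. indicator B \<omega> * (\<integral>\<^sup>+y. g y \<partial>p (t - s) (X s \<omega>)) \<partial>(\<nu> \<bind> P))"
proof -
  have [measurable]: "B \<in> sets M" using B sets_nat_filtration_subset by blast
  have ts: "0 \<le> t" "0 \<le> t - s" using st by auto
  have [measurable]: "(\<lambda>y. \<integral>\<^sup>+z. g z \<partial>p (t - s) y) \<in> borel_measurable borel"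
    using nn_integral_measurable_subprob_algebra[OF g] measurable_p_subprob[OF ts(2)]
    by (rule measurable_compose[rotated])
  have m1: "(\<lambda>\<omega>. indicator B \<omega> * g (X t \<omega>)) \<in> borel_measurable M"
    and m2: "(\<lambda>\<omega>. indicator B \<omega> * (\<integral>\<^sup>+y. g y \<partial>p (t - s) (X s \<omega>))) \<in> borel_measurable M"
    using ts st by measurable
  show ?thesis
    unfolding nn_integral_bind[OF m1 measurable_P_init] nn_integral_bind[OF m2 measurable_P_init]
    by (simp add: markov_nn_integral[OF st B g])
qed

lemma nn_integral_weight_X_init_finite:
  assumes "0 \<le> t"
  shows "(\<integral>\<^sup>+\<omega>. ennreal (\<rho> (X t \<omega>)) \<partial>(\<nu> \<bind> P)) < \<infinity>"
proof -
  have "(\<lambda>\<omega>. ennreal (\<rho> (X t \<omega>))) \<in> borel_measurable M" using assms by measurable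
  then have "(\<integral>\<^sup>+\<omega>. ennreal (\<rho> (X t \<omega>)) \<partial>(\<nu> \<bind> P)) = (\<integral>\<^sup>+x. (\<integral>\<^sup>+\<omega>. ennreal (\<rho> (X t \<omega>)) \<partial>P x) \<partial>\<nu>)"
    by (rule nn_integral_bind[OF _ measurable_P_init])
  also have "\<dots> = (\<integral>\<^sup>+x. (\<integral>\<^sup>+y. ennreal (\<rho> y) \<partial>p t x) \<partial>\<nu>)"
    by (rule nn_integral_cong) (rule nn_integral_X_eq[OF assms], simp)
  also have "\<dots> \<le> (\<integral>\<^sup>+x. ennreal (moment_bound t) * ennreal (\<rho> x) \<partial>\<nu>)"
    using nn_integral_weight_p_le[OF assms] one_le_moment_bound[of t] weight_nonneg
    by (intro nn_integral_mono) (simp add: ennreal_mult[symmetric])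
  also have "\<dots> = ennreal (moment_bound t) * (\<integral>\<^sup>+x. ennreal (\<rho> x) \<partial>\<nu>)"
    by (rule nn_integral_cmult) simp
  also have "\<dots> < \<infinity>" using weight_moment_init by (simp add: ennreal_mult_less_top)
  finally show ?thesis .
qed

lemma cond_exp_nat_filtration_init:
  assumes st: "0 \<le> s" "s \<le> t" and f: "f \<in> B_rho \<rho>"
  shows "integrable (\<nu> \<bind> P) (\<lambda>\<omega>. f (X t \<omega>))"
    "AE \<omega> in \<nu> \<bind> P. real_cond_exp (\<nu> \<bind> P) (nat_filtration M X s) (\<lambda>\<omega>'. f (X t \<omega>')) \<omega>
      = transition_op (t - s) f (X s \<omega>)"
proof -
  have sfs: "sigma_finite_subalgebra (\<nu> \<bind> P) (nat_filtration M X s)"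
    using sets_nat_filtration_subset sets_init_bind
    by (intro sigma_finite_subalgebra_of_prob[OF prob_space_init_bind])
      (simp_all add: sets_eq_imp_space_eq[OF sets_init_bind])
  have nn_markov: "\<And>B g. B \<in> sets (nat_filtration M X s) \<Longrightarrow> g \<in> borel_measurable borel \<Longrightarrow>
      (\<integral>\<^sup>+\<omega>. indicator B \<omega> * g (X t \<omega>) \<partial>(\<nu> \<bind> P))
    = (\<integral>\<^sup>+\<omega>. indicator B \<omega> * (\<integral>\<^sup>+y. g y \<partial>p (t - s) (X s \<omega>)) \<partial>(\<nu> \<bind> P))"
    by (rule markov_nn_integral_init[OF st])
  have fin: "(\<integral>\<^sup>+\<omega>. ennreal (\<rho> (X t \<omega>)) \<partial>(\<nu> \<bind> P)) < \<infinity>"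
    using st by (intro nn_integral_weight_X_init_finite) simp
  note ce = cond_exp_X_eq_transition_op[OF sfs sets_init_bind st measurable_nat_filtration[OF st(1) order_refl]
      nn_markov fin borel_measurable_B_rho[OF f] abs_le_rho_norm_B_rho[OF f]]
  show "integrable (\<nu> \<bind> P) (\<lambda>\<omega>. f (X t \<omega>))" by (rule ce(1))
  show "AE \<omega> in \<nu> \<bind> P. real_cond_exp (\<nu> \<bind> P) (nat_filtration M X s) (\<lambda>\<omega>'. f (X t \<omega>')) \<omega>
      = transition_op (t - s) f (X s \<omega>)" by (rule ce(2))
qed

end


lemma right_continuous_X: "\<omega> \<in> space M \<Longrightarrow> 0 \<le> s \<Longrightarrow> ((\<lambda>u. X u \<omega>) \<longlongrightarrow> X s \<omega>) (at_right s)"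
  using feller by (auto simp: feller_process_def cadlag_paths_def)

lemma abs_transition_op_le_sup:
  assumes "0 \<le> a" "g \<in> borel_measurable borel" "\<And>z. \<bar>g z\<bar> \<le> B"
  shows "\<bar>transition_op a g y\<bar> \<le> B"
proof -
  interpret prob_space "p a y" by (rule prob_space_p[OF assms(1)])
  have "g \<in> borel_measurable (p a y)" using assms(2) by (simp add: measurable_cong_sets[OF sets_p[OF assms(1)] refl])
  moreover have "0 \<le> B" using assms(3)[of undefined] by linarith
  ultimately have "\<bar>\<integral>z. g z \<partial>p a y\<bar> \<le> (\<integral>z. B \<partial>p a y)"
    using assms(3) by (intro abs_integral_le_integral integrable_const_bound[where B=B]) auto
  then show ?thesis by (simp add: transition_op_def prob_space)
qed

text \<open>Write \<open>T(r) h = T(r - e) T(e) h\<close>: \<open>T(r - e)\<close> is a contraction in the supremum norm and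
  \<open>T(e) h \<rightarrow> h\<close> uniformly, while \<open>T(r) h\<close> is continuous.\<close>
lemma transition_op_tendsto_C0:
  fixes e :: "nat \<Rightarrow> real" and y :: "nat \<Rightarrow> 'a"
  assumes r: "0 < r" and e: "\<And>n. 0 < e n \<and> e n < r" and e_lim: "e \<longlonglongrightarrow> 0"
    and h: "h \<in> C0" and y_lim: "y \<longlonglongrightarrow> y\<^sub>0"
  shows "(\<lambda>n. transition_op (r - e n) h (y n)) \<longlonglongrightarrow> transition_op r h y\<^sub>0"
proof -
  define S where "S n = (SUP z. \<bar>transition_op (e n) h z - h z\<bar>)" for n
  have "filterlim e (at_right 0) sequentially"
    by (rule tendsto_imp_filterlim_at_right[OF e_lim]) (use e in auto)
  then have S_lim: "S \<longlonglongrightarrow> 0"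
    unfolding S_def by (rule filterlim_compose[OF transition_op_strongly_continuous_C0[OF h]])
  have hB: "h \<in> B_rho \<rho>" using h C0_subset_B_rho by blast
  have "\<bar>transition_op (r - e n) h y' - transition_op r h y'\<bar> \<le> S n" for n y'
  proof -
    have en: "0 \<le> e n" "0 \<le> r - e n" using e[of n] by auto
    have q: "transition_op (e n) h \<in> B_rho \<rho>" using transition_op_C0[OF en(1) h] C0_subset_B_rho by blast
    have "transition_op r h = transition_op (r - e n) (transition_op (e n) h)"
      using transition_op_semigroup[OF en(2) en(1) borel_measurable_B_rho[OF hB] abs_le_rho_norm_B_rho[OF hB]]
      by simp
    then have "transition_op r h y' - transition_op (r - e n) h y'
        = transition_op (r - e n) (\<lambda>z. transition_op (e n) h z - h z) y'"
      using transition_op_diff[OF en(2) borel_measurable_B_rho[OF q] borel_measurable_B_rho[OF hB]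
          abs_le_rho_norm_B_rho[OF q] abs_le_rho_norm_B_rho[OF hB]] by simp
    also have "\<bar>\<dots>\<bar> \<le> S n"
    proof (rule abs_transition_op_le_sup[OF en(2)])
      show "(\<lambda>z. transition_op (e n) h z - h z) \<in> borel_measurable borel"
        using borel_measurable_B_rho[OF q] borel_measurable_B_rho[OF hB] by simp
      show "\<bar>transition_op (e n) h z - h z\<bar> \<le> S n" for z
        unfolding S_def by (rule abs_transition_op_diff_le_SUP[OF en(1) h])
    qed
    finally show ?thesis by (simp add: abs_minus_commute)
  qed
  then have "(\<lambda>n. transition_op (r - e n) h (y n) - transition_op r h (y n)) \<longlonglongrightarrow> 0"
    by (intro Lim_null_comparison[OF always_eventually S_lim] allI) simp
  moreover have "transition_op r h \<in> C0" using r by (intro transition_op_C0[OF _ h]) simp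
  then have "continuous_on UNIV (transition_op r h)" unfolding C0_def mem_Collect_eq by (rule conjunct1)
  then have "(\<lambda>n. transition_op r h (y n)) \<longlonglongrightarrow> transition_op r h y\<^sub>0"
    using y_lim by (rule continuous_on_tendsto_compose) (simp_all add: always_eventually)
  ultimately have "(\<lambda>n. (transition_op (r - e n) h (y n) - transition_op r h (y n)) + transition_op r h (y n))
      \<longlonglongrightarrow> 0 + transition_op r h y\<^sub>0"
    by (rule tendsto_add)
  then show ?thesis by simp
qed

lemma tendsto_transition_op_X:
  fixes e :: "nat \<Rightarrow> real"
  assumes \<omega>: "\<omega> \<in> space M" and s: "0 \<le> s" and r: "0 < r" and e: "\<And>n. 0 < e n \<and> e n < r"
    and e_lim: "e \<longlonglongrightarrow> 0" and h: "h \<in> C0"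
  shows "(\<lambda>n. transition_op (r - e n) h (X (s + e n) \<omega>)) \<longlonglongrightarrow> transition_op r h (X s \<omega>)"
proof (rule transition_op_tendsto_C0[OF r e e_lim h])
  have "filterlim (\<lambda>n. s + e n) (at_right s) sequentially"
    using tendsto_add[OF tendsto_const e_lim, of s] e
    by (intro tendsto_imp_filterlim_at_right) (auto intro: always_eventually)
  then show "(\<lambda>n. X (s + e n) \<omega>) \<longlonglongrightarrow> X s \<omega>"
    by (rule filterlim_compose[OF right_continuous_X[OF \<omega> s]])
qed

lemma tendsto_integral_transition_op_X:
  fixes e :: "nat \<Rightarrow> real"
  assumes s: "0 \<le> s" and r: "0 < r" and e: "\<And>n. 0 < e n \<and> e n < r" and e_lim: "e \<longlonglongrightarrow> 0"
    and h: "h \<in> C0" and B: "B \<in> sets M"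
  shows "(\<lambda>n. \<integral>\<omega>. indicator B \<omega> * transition_op (r - e n) h (X (s + e n) \<omega>) \<partial>P x)
    \<longlonglongrightarrow> (\<integral>\<omega>. indicator B \<omega> * transition_op r h (X s \<omega>) \<partial>P x)"
proof -
  interpret prob_space "P x" by (rule prob_space_P)
  obtain K where K: "\<And>z. \<bar>h z\<bar> \<le> K" using C0_bounded[OF h] by blast
  have hm: "h \<in> borel_measurable borel"
    using h C0_subset_Cb borel_measurable_Cb by blast
  have [measurable]: "B \<in> sets (P x)" using B by (simp add: sets_P)
  have en: "0 \<le> r - e n" "0 \<le> s + e n" for n using e[of n] s by auto
  have [measurable]: "transition_op r h \<in> borel_measurable borel" "X s \<in> P x \<rightarrow>\<^sub>M borel"
    using r s hm by (auto intro: borel_measurable_transition_op)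
  show ?thesis
  proof (rule integral_dominated_convergence[where w="\<lambda>_. K"])
    show "(\<lambda>\<omega>. indicator B \<omega> * transition_op r h (X s \<omega>)) \<in> borel_measurable (P x)"
      by measurable
    show "(\<lambda>\<omega>. indicator B \<omega> * transition_op (r - e n) h (X (s + e n) \<omega>)) \<in> borel_measurable (P x)" for n
    proof -
      have [measurable]: "transition_op (r - e n) h \<in> borel_measurable borel" "X (s + e n) \<in> P x \<rightarrow>\<^sub>M borel"
        using en[of n] hm by (auto intro: borel_measurable_transition_op)
      show ?thesis by measurable
    qed
    show "integrable (P x) (\<lambda>_. K)" by simp
    show "AE \<omega> in P x. norm (indicator B \<omega> * transition_op (r - e n) h (X (s + e n) \<omega>)) \<le> K" for n
    proof (rule AE_I2)
      fix \<omega>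
      have "\<bar>transition_op (r - e n) h (X (s + e n) \<omega>)\<bar> \<le> K"
        by (rule abs_transition_op_le_sup[OF en(1) hm K])
      moreover have "0 \<le> K" using K[of undefined] by linarith
      ultimately show "norm (indicator B \<omega> * transition_op (r - e n) h (X (s + e n) \<omega>)) \<le> K"
        by (auto simp: indicator_def)
    qed
    show "AE \<omega> in P x. (\<lambda>n. indicator B \<omega> * transition_op (r - e n) h (X (s + e n) \<omega>))
        \<longlonglongrightarrow> indicator B \<omega> * transition_op r h (X s \<omega>)"
    proof (rule AE_I2)
      fix \<omega> assume "\<omega> \<in> space (P x)"
      then show "(\<lambda>n. indicator B \<omega> * transition_op (r - e n) h (X (s + e n) \<omega>))
          \<longlonglongrightarrow> indicator B \<omega> * transition_op r h (X s \<omega>)"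
        by (intro tendsto_mult tendsto_const tendsto_transition_op_X[OF _ s r e e_lim h]) (simp add: space_P)
    qed
  qed
qed

text \<open>A set in \<open>F\<^sub>s\<^sub>+\<close> lies in every \<open>F\<^sub>u\<close>, \<open>u > s\<close>; apply the Markov property at \<open>u \<down> s\<close> and
  pass to the limit using right-continuity of the paths.\<close>
lemma markov_integral_rc_C0:
  assumes s: "0 \<le> s" and st: "s < t" and h: "h \<in> C0" and B: "B \<in> sets (rc_filtration M X s)"
  shows "(\<integral>\<omega>. indicator B \<omega> * h (X t \<omega>) \<partial>P x) = (\<integral>\<omega>. indicator B \<omega> * transition_op (t - s) h (X s \<omega>) \<partial>P x)"
proof -
  define r where "r = t - s"
  have r: "0 < r" using st by (simp add: r_def)
  define e where "e n = r / real (Suc (Suc n))" for n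
  have e: "0 < e n \<and> e n < r" for n
    using r by (auto simp: e_def intro: divide_strict_left_mono[of 1, simplified])
  have e_lim: "e \<longlonglongrightarrow> 0"
    unfolding e_def by (rule LIMSEQ_Suc[OF LIMSEQ_Suc[OF lim_const_over_n]])
  have hB: "h \<in> B_rho \<rho>" using h C0_subset_B_rho by blast
  have "(\<integral>\<omega>. indicator B \<omega> * h (X t \<omega>) \<partial>P x)
      = (\<integral>\<omega>. indicator B \<omega> * transition_op (r - e n) h (X (s + e n) \<omega>) \<partial>P x)" for n
  proof -
    have "B \<in> sets (nat_filtration M X (s + e n))"
      using sets_rc_filtration_subset_nat[of s "s + e n"] B e[of n] by auto
    from markov_integral_P(2)[OF _ _ this borel_measurable_B_rho[OF hB] abs_le_rho_norm_B_rho[OF hB], of t x]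
    show ?thesis using e[of n] s by (simp add: r_def algebra_simps)
  qed
  then have "(\<lambda>n. \<integral>\<omega>. indicator B \<omega> * h (X t \<omega>) \<partial>P x)
      \<longlonglongrightarrow> (\<integral>\<omega>. indicator B \<omega> * transition_op r h (X s \<omega>) \<partial>P x)"
    using tendsto_integral_transition_op_X[OF s r e e_lim h, of B x] B sets_rc_filtration_subset
    by auto
  then show ?thesis by (simp add: LIMSEQ_const_iff r_def)
qed

text \<open>Approximate \<open>f\<close> by \<open>h \<in> C\<^sub>0\<close> within \<open>d \<rho>\<close>: both sides move by at most
  \<open>d \<integral> \<rho>(X\<^sub>t) dP\<^sub>x\<close>, because \<open>\<integral> T(t - s) \<rho>(X\<^sub>s) dP\<^sub>x = \<integral> \<rho>(X\<^sub>t) dP\<^sub>x\<close>.\<close>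
lemma markov_integral_rc:
  assumes s: "0 \<le> s" and st: "s \<le> t" and f: "f \<in> B_rho \<rho>" and B: "B \<in> sets (rc_filtration M X s)"
  shows "(\<integral>\<omega>. indicator B \<omega> * f (X t \<omega>) \<partial>P x) = (\<integral>\<omega>. indicator B \<omega> * transition_op (t - s) f (X s \<omega>) \<partial>P x)"
proof (cases "s = t")
  case True
  then show ?thesis using transition_op_0[OF borel_measurable_B_rho[OF f]] by simp
next
  case False
  have r: "0 \<le> t - s" and t: "0 \<le> t" using s st by auto
  have BP: "B \<in> sets (P x)" using B sets_rc_filtration_subset by (auto simp: sets_P)
  note fm = borel_measurable_B_rho[OF f] and fb = abs_le_rho_norm_B_rho[OF f]
  have \<rho>b: "\<And>y. \<bar>\<rho> y\<bar> \<le> 1 * \<rho> y" using weight_nonneg by simp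
  define I where "I = (\<integral>\<omega>. \<rho> (X t \<omega>) \<partial>P x)"
  have I: "0 \<le> 2 * I" unfolding I_def by (simp add: integral_nonneg_AE weight_nonneg)
  have I_T: "(\<integral>\<omega>. transition_op (t - s) \<rho> (X s \<omega>) \<partial>P x) = I"
    unfolding I_def by (rule markov_integral_P_space[OF s st borel_measurable_weight \<rho>b, symmetric])
  show ?thesis
  proof (rule eq_0_if_abs_le_all_pos[OF I, THEN eq_iff_diff_eq_0[THEN iffD2]])
    fix d :: real assume d: "0 < d"
    obtain h where h: "h \<in> C0" "\<And>y. \<bar>f y - h y\<bar> \<le> d * \<rho> y" using C0_dense_B_rho[OF f d] by blast
    have hB: "h \<in> B_rho \<rho>" using h(1) C0_subset_B_rho by blast
    note hm = borel_measurable_B_rho[OF hB] and hb = abs_le_rho_norm_B_rho[OF hB]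
    have "\<bar>(\<integral>\<omega>. indicator B \<omega> * f (X t \<omega>) \<partial>P x) - (\<integral>\<omega>. indicator B \<omega> * h (X t \<omega>) \<partial>P x)\<bar> \<le> d * I"
      unfolding I_def
      by (rule abs_integral_indicator_diff_le[OF integrable_X_weight_bounded[OF t fm fb]
          integrable_X_weight_bounded[OF t hm hb] integrable_X_weight_bounded[OF t borel_measurable_weight \<rho>b]
          BP h(2)])
    moreover have "\<bar>(\<integral>\<omega>. indicator B \<omega> * transition_op (t - s) f (X s \<omega>) \<partial>P x)
        - (\<integral>\<omega>. indicator B \<omega> * transition_op (t - s) h (X s \<omega>) \<partial>P x)\<bar> \<le> d * I"
      unfolding I_T[symmetric]
      by (rule abs_integral_indicator_diff_le[OF integrable_transition_op_X[OF s r fm fb]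
          integrable_transition_op_X[OF s r hm hb] integrable_transition_op_X[OF s r borel_measurable_weight \<rho>b]
          BP abs_transition_op_diff_le[OF r f hB h(2)]])
    moreover have "(\<integral>\<omega>. indicator B \<omega> * h (X t \<omega>) \<partial>P x)
        = (\<integral>\<omega>. indicator B \<omega> * transition_op (t - s) h (X s \<omega>) \<partial>P x)"
      using False st by (intro markov_integral_rc_C0[OF s _ h(1) B]) simp
    ultimately show "\<bar>(\<integral>\<omega>. indicator B \<omega> * f (X t \<omega>) \<partial>P x)
        - (\<integral>\<omega>. indicator B \<omega> * transition_op (t - s) f (X s \<omega>) \<partial>P x)\<bar> \<le> d * (2 * I)"
      by simp
  qed
qed

lemma cond_exp_rc_filtration:
  assumes st: "0 \<le> s" "s \<le> t" and f: "f \<in> B_rho \<rho>"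
  shows "integrable (P x) (\<lambda>\<omega>. f (X t \<omega>))"
    "AE \<omega> in P x. real_cond_exp (P x) (rc_filtration M X s) (\<lambda>\<omega>'. f (X t \<omega>')) \<omega>
      = transition_op (t - s) f (X s \<omega>)"
proof -
  have ts: "0 \<le> t" "0 \<le> t - s" using st by auto
  note fm = borel_measurable_B_rho[OF f] and fb = abs_le_rho_norm_B_rho[OF f]
  show int: "integrable (P x) (\<lambda>\<omega>. f (X t \<omega>))" by (rule integrable_X_weight_bounded[OF ts(1) fm fb])
  interpret sigma_finite_subalgebra "P x" "rc_filtration M X s"
    by (rule sigma_finite_subalgebra_P[OF sets_rc_filtration_subset]) simp
  show "AE \<omega> in P x. real_cond_exp (P x) (rc_filtration M X s) (\<lambda>\<omega>'. f (X t \<omega>')) \<omega>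
      = transition_op (t - s) f (X s \<omega>)"
  proof (rule real_cond_exp_charact)
    show "integrable (P x) (\<lambda>\<omega>. transition_op (t - s) f (X s \<omega>))"
      by (rule integrable_transition_op_X[OF st(1) ts(2) fm fb])
    show "(\<lambda>\<omega>. transition_op (t - s) f (X s \<omega>)) \<in> borel_measurable (rc_filtration M X s)"
      by (rule measurable_compose[OF measurable_rc_filtration[OF st(1)] borel_measurable_transition_op[OF ts(2) fm]])
    show "(\<integral>\<omega>\<in>B. f (X t \<omega>) \<partial>P x) = (\<integral>\<omega>\<in>B. transition_op (t - s) f (X s \<omega>) \<partial>P x)"
      if "B \<in> sets (rc_filtration M X s)" for B
      unfolding set_lebesgue_integral_def using markov_integral_rc[OF st f that] by simp
  qed (rule int)
qed

end

theorem mainTheorem10: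
  fixes \<rho> :: "'a::t2_space \<Rightarrow> real"
    and M :: "'w measure"
    and P :: "'a \<Rightarrow> 'w measure"
    and X :: "real \<Rightarrow> 'w \<Rightarrow> 'a"
    and p :: "real \<Rightarrow> 'a \<Rightarrow> 'a measure"
    and \<nu> :: "'a measure"
    and t0 C :: real
  assumes "completely_regular_space (euclidean :: 'a topology)"
    and "locally_compact_space (euclidean :: 'a topology)"
    and "admissible_weight \<rho>"
    and "feller_process M P X p"
    and "radon_prob \<nu>"
    and "(\<integral>\<^sup>+ x. ennreal (\<rho> x) \<partial>\<nu>) < \<infinity>"
    and "t0 > 0" and "C > 0"
    and "\<forall>x. \<forall>t\<in>{0..t0}. (\<integral>\<^sup>+ \<omega>. ennreal (\<rho> (X t \<omega>)) \<partial>P x) \<le> ennreal (C * \<rho> x)"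
  shows "(\<forall>t\<ge>0. \<forall>x. \<forall>f\<in>B_rho \<rho>. integrable (p t x) f)
       \<and> gen_feller_semigroup \<rho> (\<lambda>t f x. \<integral>y. f y \<partial>p t x)
       \<and> (\<forall>s\<ge>0. \<forall>t\<ge>s. \<forall>f\<in>B_rho \<rho>.
            integrable (\<nu> \<bind> P) (\<lambda>\<omega>. f (X t \<omega>)) \<and>
            (AE \<omega> in \<nu> \<bind> P. real_cond_exp (\<nu> \<bind> P) (nat_filtration M X s) (\<lambda>\<omega>'. f (X t \<omega>')) \<omega>
                  = (\<integral>y. f y \<partial>p (t - s) (X s \<omega>))))
       \<and> (\<forall>x. \<forall>s\<ge>0. \<forall>t\<ge>s. \<forall>f\<in>B_rho \<rho>.
            integrable (P x) (\<lambda>\<omega>. f (X t \<omega>)) \<and>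
            (AE \<omega> in P x. real_cond_exp (P x) (rc_filtration M X s) (\<lambda>\<omega>'. f (X t \<omega>')) \<omega>
                  = (\<integral>y. f y \<partial>p (t - s) (X s \<omega>))))"
proof -
  interpret weighted_feller_process \<rho> M P X p t0 C
    by unfold_locales (use assms in auto)
  have "gen_feller_semigroup \<rho> (\<lambda>t f x. \<integral>y. f y \<partial>p t x)"
    using gen_feller_semigroup_transition_op unfolding transition_op_def[abs_def] .
  moreover have "integrable (\<nu> \<bind> P) (\<lambda>\<omega>. f (X t \<omega>)) \<and>
      (AE \<omega> in \<nu> \<bind> P. real_cond_exp (\<nu> \<bind> P) (nat_filtration M X s) (\<lambda>\<omega>'. f (X t \<omega>')) \<omega>
         = (\<integral>y. f y \<partial>p (t - s) (X s \<omega>)))"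
    if "0 \<le> s" "s \<le> t" "f \<in> B_rho \<rho>" for s t f
    using cond_exp_nat_filtration_init[OF assms(5,6) that] unfolding transition_op_def by (rule conjI)
  moreover have "integrable (P x) (\<lambda>\<omega>. f (X t \<omega>)) \<and>
      (AE \<omega> in P x. real_cond_exp (P x) (rc_filtration M X s) (\<lambda>\<omega>'. f (X t \<omega>')) \<omega>
         = (\<integral>y. f y \<partial>p (t - s) (X s \<omega>)))"
    if "0 \<le> s" "s \<le> t" "f \<in> B_rho \<rho>" for x s t f
    using cond_exp_rc_filtration[OF that] unfolding transition_op_def by (rule conjI)
  ultimately show ?thesis using integrable_p_B_rho by simp
qed

end
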